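(* Let $\Phi$ be a uniformly absolutely convergent interaction on $X=E^{\mathbb{Z}}$ ($E$ finite) satisfying the Dobrushin condition $\bar c(\Phi)<1$, and let $f^{(k)}=\frac{d\nu^{(k)}}{d\nu^{(0)}}$, $k\in\mathbb{N}$. Suppose the family $\{f^{(k)}\}_{k\in\mathbb{N}}$ is uniformly integrable in $L^1(\nu^{(0)})$. Then any weak$^*$ limit point of the sequence $(\nu^{(k)})$ is a Gibbs measure for $\Phi$ and is absolutely continuous with respect to $\nu^{(0)}$.
   Context: An interaction $\Phi=(\Phi_\Lambda)_{\Lambda\Subset\mathbb{Z}}$ consists of functions $\Phi_\Lambda$ on $X$ depending only on coordinates in $\Lambda$; UAC means $\sup_i\sum_{V\ni i}\|\Phi_V\|_\infty<\infty$. Gibbs measures for $\Phi$ are probabilities consistent with $\gamma^\Phi_\Lambda(\omega_\Lambda|\eta_{\Lambda^c})=e^{-H^\Phi_\Lambda(\omega_\Lambda\eta_{\Lambda^c})}/\sum_{\bar\omega_\Lambda}e^{-H^\Phi_\Lambda(\bar\omega_\Lambda\eta_{\Lambda^c})}$, $H^\Phi_\Lambda=\sum_{V\cap\Lambda\ne\emptyset}\Phi_V$. Dobrushin condition: $\bar c(\Phi)=\frac12\sup_i\sum_{\Lambda\ni i}(|\Lambda|-1)\delta(\Phi_\Lambda)<1$, $\delta(f)=\sup_{\xi,\eta}|f(\xi)-f(\eta)|$. Let $\mathcal A=\{\Lambda\Subset\mathbb{Z}:\min\Lambda<0\le\max\Lambda\}=\{\Lambda_1,\Lambda_2,\dots\}$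 (fixed arbitrary enumeration) and, for $k\ge0$, $\Psi^{(k)}_\Lambda=0$ if $\Lambda\in\{\Lambda_i:i\ge k+1\}$, $\Psi^{(k)}_\Lambda=\Phi_\Lambda$ otherwise. Under the Dobrushin condition each $\Psi^{(k)}$ has a unique Gibbs measure $\nu^{(k)}$, and $\nu^{(k)}\ll\nu^{(0)}$. *)

theory Defs
  imports "HOL-Probability.Probability"
begin

text \<open>Configurations X = E^Z are functions int => 'e with 'e finite.
  An interaction is a map Phi :: int set => (int => 'e) => real; only its values on
  finite sets are ever used.\<close>

type_synonym 'e config = "int \<Rightarrow> 'e"
type_synonym 'e interaction = "int set \<Rightarrow> 'e config \<Rightarrow> real"

definition Xspace :: "('e::finite) config measure" where
  "Xspace = PiM UNIV (\<lambda>_::int. count_space (UNIV::'e set))"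

definition Xtop :: "('e::finite) config topology" where
  "Xtop = product_topology (\<lambda>_::int. discrete_topology (UNIV::'e set)) UNIV"

definition is_interaction :: "('e::finite) interaction \<Rightarrow> bool" where
  "is_interaction \<Phi> \<longleftrightarrow>
     (\<forall>V \<omega> \<omega>'. finite V \<longrightarrow> (\<forall>i\<in>V. \<omega> i = \<omega>' i) \<longrightarrow> \<Phi> V \<omega> = \<Phi> V \<omega>')"

definition supnorm :: "('e config \<Rightarrow> real) \<Rightarrow> real" where
  "supnorm f = Sup (range (\<lambda>\<omega>. \<bar>f \<omega>\<bar>))"

definition osc :: "('e config \<Rightarrow> real) \<Rightarrow> real" where
  "osc f = Sup {\<bar>f \<xi> - f \<eta>\<bar> | \<xi> \<eta>. True}"

definition UAC :: "('e::finite) interaction \<Rightarrow> bool" where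
  "UAC \<Phi> \<longleftrightarrow> (\<exists>C. \<forall>i::int.
      (\<lambda>V. supnorm (\<Phi> V)) summable_on {V. finite V \<and> i \<in> V} \<and>
      (\<Sum>\<^sub>\<infinity>V\<in>{V. finite V \<and> i \<in> V}. supnorm (\<Phi> V)) \<le> C)"

definition dobrushin :: "('e::finite) interaction \<Rightarrow> bool" where
  "dobrushin \<Phi> \<longleftrightarrow> (\<exists>c<1. \<forall>i::int.
      (\<lambda>\<Lambda>. (real (card \<Lambda>) - 1) * osc (\<Phi> \<Lambda>)) summable_on {\<Lambda>. finite \<Lambda> \<and> i \<in> \<Lambda>} \<and>
      (1/2) * (\<Sum>\<^sub>\<infinity>\<Lambda>\<in>{\<Lambda>. finite \<Lambda> \<and> i \<in> \<Lambda>}. (real (card \<Lambda>) - 1) * osc (\<Phi> \<Lambda>)) \<le> c)"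

definition hamiltonian :: "('e::finite) interaction \<Rightarrow> int set \<Rightarrow> 'e config \<Rightarrow> real" where
  "hamiltonian \<Phi> \<Lambda> \<sigma> = (\<Sum>\<^sub>\<infinity>V\<in>{V. finite V \<and> V \<inter> \<Lambda> \<noteq> {}}. \<Phi> V \<sigma>)"

definition agree_off :: "int set \<Rightarrow> ('e::finite) config \<Rightarrow> 'e config set" where
  "agree_off \<Lambda> \<eta> = {\<sigma>. \<forall>i. i \<notin> \<Lambda> \<longrightarrow> \<sigma> i = \<eta> i}"

definition gibbs_spec :: "('e::finite) interaction \<Rightarrow> int set \<Rightarrow> 'e config set \<Rightarrow> 'e config \<Rightarrow> real" where
  "gibbs_spec \<Phi> \<Lambda> A \<eta> =
     (\<Sum>\<sigma>\<in>agree_off \<Lambda> \<eta>. indicator A \<sigma> * exp (- hamiltonian \<Phi> \<Lambda> \<sigma>)) /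
     (\<Sum>\<sigma>\<in>agree_off \<Lambda> \<eta>. exp (- hamiltonian \<Phi> \<Lambda> \<sigma>))"

definition gibbs_measure :: "('e::finite) interaction \<Rightarrow> 'e config measure \<Rightarrow> bool" where
  "gibbs_measure \<Phi> \<mu> \<longleftrightarrow> sets \<mu> = sets Xspace \<and> prob_space \<mu> \<and>
     (\<forall>\<Lambda> A. finite \<Lambda> \<longrightarrow> A \<in> sets \<mu> \<longrightarrow>
        emeasure \<mu> A = (\<integral>\<^sup>+ \<eta>. ennreal (gibbs_spec \<Phi> \<Lambda> A \<eta>) \<partial>\<mu>))"

definition crossing_sets :: "int set set" where
  "crossing_sets = {\<Lambda>. finite \<Lambda> \<and> \<Lambda> \<noteq> {} \<and> Min \<Lambda> < 0 \<and> 0 \<le> Max \<Lambda>}"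

definition Psi :: "(nat \<Rightarrow> int set) \<Rightarrow> ('e::finite) interaction \<Rightarrow> nat \<Rightarrow> 'e interaction" where
  "Psi enum \<Phi> k \<Lambda> = (if \<Lambda> \<in> enum ` {i. k + 1 \<le> i} then (\<lambda>_. 0) else \<Phi> \<Lambda>)"

definition unif_integrable :: "'a measure \<Rightarrow> (nat \<Rightarrow> 'a \<Rightarrow> real) \<Rightarrow> bool" where
  "unif_integrable M f \<longleftrightarrow> (\<forall>k. integrable M (f k)) \<and>
     (\<forall>e>0. \<exists>K. \<forall>k. (\<integral>x. indicator {x. K < \<bar>f k x\<bar>} x * \<bar>f k x\<bar> \<partial>M) \<le> e)"

definition weak_star_conv :: "(nat \<Rightarrow> ('e::finite) config measure) \<Rightarrow> 'e config measure \<Rightarrow> bool" where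
  "weak_star_conv \<nu> \<mu> \<longleftrightarrow> (\<forall>g. continuous_map Xtop euclideanreal g \<longrightarrow>
      (\<lambda>j. \<integral>x. g x \<partial>\<nu> j) \<longlonglongrightarrow> (\<integral>x. g x \<partial>\<mu>))"

end

theory Submission
  imports Defs
begin

text \<open>
  Write \<open>\<Psi>\<^sub>k\<close> for \<open>\<Phi>\<close> with the sets \<open>\<Lambda>\<^sub>i\<close>, \<open>i > k\<close>, removed, and \<open>\<nu>\<^sub>k\<close> for its Gibbs
  measure.

  For finite \<open>\<Lambda>\<close>, every set removed from \<open>\<Phi>\<close> for large \<open>k\<close> lies in the tail
  of the convergent series of the sup norms of \<open>\<Phi>\<^sub>V\<close> over the finite \<open>V\<close> meeting \<open>\<Lambda>\<close>.
  Hence the Hamiltonians of \<open>\<Psi>\<^sub>k\<close> on \<open>\<Lambda>\<close> converge uniformly to that of \<open>\<Phi>\<close>, and so do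
  the kernels \<open>\<gamma>\<^sub>\<Lambda>(C | \<cdot>)\<close>. For a cylinder set \<open>C\<close> the limit kernel is a uniform limit of
  local functions, hence continuous on \<open>X\<close>, so letting \<open>k \<rightarrow> \<infinity>\<close> in the DLR equation of
  \<open>\<nu>\<^sub>k\<close> at \<open>C\<close> gives the DLR equation of \<open>\<mu>\<close> at \<open>C\<close>, and Dynkin's \<open>\<pi>\<close>-\<open>\<lambda>\<close> theorem extends
  it to all measurable sets.

  Uniform integrability of the densities gives for every \<open>\<epsilon> > 0\<close> a \<open>K\<close>
  with \<open>\<nu>\<^sub>k(B) \<le> K \<nu>\<^sub>0(B) + \<epsilon>\<close> for all \<open>k\<close> and \<open>B\<close>. On cylinder sets this passes to the
  weak* limit \<open>\<mu>\<close>, and approximating measurable sets by cylinder sets with respect to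
  \<open>\<mu> + \<nu>\<^sub>0\<close> extends it to all \<open>B\<close>. Hence \<open>\<nu>\<^sub>0(N) = 0\<close> forces \<open>\<mu>(N) \<le> \<epsilon>\<close> for every \<open>\<epsilon>\<close>.
\<close>

section \<open>Local and quasilocal functions\<close>

lemma space_Xspace [simp]: "space (Xspace :: ('e::finite) config measure) = UNIV"
  by (simp add: Xspace_def space_PiM)

lemma topspace_Xtop [simp]: "topspace (Xtop :: ('e::finite) config topology) = UNIV"
  by (simp add: Xtop_def)

lemma space_eq_UNIV_if_sets_Xspace:
  "sets M = sets (Xspace :: ('e::finite) config measure) \<Longrightarrow> space M = UNIV"
  by (drule sets_eq_imp_space_eq) simp

definition local_on :: "int set \<Rightarrow> (('e::finite) config \<Rightarrow> 'b) \<Rightarrow> bool" where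
  "local_on J f \<longleftrightarrow> finite J \<and> (\<forall>\<sigma> \<tau>. (\<forall>i\<in>J. \<sigma> i = \<tau> i) \<longrightarrow> f \<sigma> = f \<tau>)"

definition cylinder_sets :: "('e::finite) config set set" where
  "cylinder_sets = {A. \<exists>J. local_on J (\<lambda>\<sigma>. \<sigma> \<in> A)}"

lemma local_on_indicator:
  "local_on J (\<lambda>\<sigma>. \<sigma> \<in> A) \<Longrightarrow> local_on J (indicator A :: ('e::finite) config \<Rightarrow> real)"
  by (auto simp: local_on_def indicator_def)

lemma prod_indicator_eq_if:
  "finite J \<Longrightarrow> (\<Prod>i\<in>J. if P i then 1 else 0 :: real) = (if \<forall>i\<in>J. P i then 1 else 0)"
  by (induction J rule: finite_induct) auto

lemma local_on_sum_repr:
  fixes f :: "('e::finite) config \<Rightarrow> real"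
  assumes "local_on J f"
  shows "f = (\<lambda>\<sigma>. \<Sum>a\<in>PiE J (\<lambda>_. UNIV). f a * (\<Prod>i\<in>J. if \<sigma> i = a i then 1 else 0))"
proof
  fix \<sigma> :: "'e config"
  have J: "finite J" using assms by (simp add: local_on_def)
  have "(\<Sum>a\<in>PiE J (\<lambda>_. UNIV). f a * (\<Prod>i\<in>J. if \<sigma> i = a i then 1 else 0))
      = (\<Sum>a\<in>PiE J (\<lambda>_. UNIV). if a = restrict \<sigma> J then f a else 0)"
  proof (rule sum.cong [OF refl])
    fix a :: "'e config" assume "a \<in> PiE J (\<lambda>_. UNIV)"
    then have "(\<forall>i\<in>J. \<sigma> i = a i) \<longleftrightarrow> a = restrict \<sigma> J"
      by (auto simp: PiE_def extensional_def fun_eq_iff)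
    then show "f a * (\<Prod>i\<in>J. if \<sigma> i = a i then 1 else 0) = (if a = restrict \<sigma> J then f a else 0)"
      by (simp add: prod_indicator_eq_if [OF J])
  qed
  also have "\<dots> = f (restrict \<sigma> J)"
    by (simp add: J finite_PiE)
  also have "\<dots> = f \<sigma>"
    using assms by (auto simp: local_on_def)
  finally show "f \<sigma> = (\<Sum>a\<in>PiE J (\<lambda>_. UNIV). f a * (\<Prod>i\<in>J. if \<sigma> i = a i then 1 else 0))" ..
qed

lemma local_on_measurable:
  fixes f :: "('e::finite) config \<Rightarrow> real"
  assumes "local_on J f"
  shows "f \<in> borel_measurable Xspace"
proof -
  have coord: "(\<lambda>\<sigma>::'e config. \<sigma> i) \<in> measurable Xspace (count_space UNIV)" for i
    unfolding Xspace_def by (rule measurable_component_singleton) simp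
  have "(\<lambda>\<sigma>::'e config. if \<sigma> i = b then 1 else 0 :: real) \<in> borel_measurable Xspace" for i b
    by (rule measurable_compose [OF coord]) simp
  then show ?thesis
    by (subst local_on_sum_repr [OF assms]) (intro borel_measurable_sum borel_measurable_times
        borel_measurable_prod borel_measurable_const)
qed

lemma local_on_continuous:
  fixes f :: "('e::finite) config \<Rightarrow> real"
  assumes "local_on J f"
  shows "continuous_map Xtop euclideanreal f"
proof -
  have J: "finite J" using assms by (simp add: local_on_def)
  have coord: "continuous_map Xtop (discrete_topology UNIV) (\<lambda>\<sigma>::'e config. \<sigma> i)" for i
    unfolding Xtop_def by (rule continuous_map_product_projection) simp
  have "continuous_map Xtop euclideanreal (\<lambda>\<sigma>::'e config. if \<sigma> i = b then 1 else 0)" for i b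
    using continuous_map_compose [OF coord] by (force simp: o_def)
  then have "continuous_map Xtop euclideanreal
      (\<lambda>\<sigma>. \<Sum>a\<in>PiE J (\<lambda>_. UNIV). f a * (\<Prod>i\<in>J. if \<sigma> i = a i then 1 else 0))"
    by (intro continuous_map_sum continuous_map_real_mult continuous_map_prod
        continuous_map_canonical_const J) (simp_all add: J finite_PiE)
  then show ?thesis
    by (subst local_on_sum_repr [OF assms])
qed

lemma cylinder_sets_algebra: "algebra UNIV (cylinder_sets :: ('e::finite) config set set)"
  unfolding algebra_iff_Un
proof (intro conjI ballI)
  show "{} \<in> cylinder_sets"
    by (auto simp: cylinder_sets_def local_on_def)
  fix A B :: "'e config set"
  assume "A \<in> cylinder_sets"
  then obtain J where J: "local_on J (\<lambda>\<sigma>. \<sigma> \<in> A)"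
    by (auto simp: cylinder_sets_def)
  then show "UNIV - A \<in> cylinder_sets"
    by (auto simp: cylinder_sets_def local_on_def)
  assume "B \<in> cylinder_sets"
  then obtain K where K: "local_on K (\<lambda>\<sigma>. \<sigma> \<in> B)"
    by (auto simp: cylinder_sets_def)
  have "local_on (J \<union> K) (\<lambda>\<sigma>. \<sigma> \<in> A \<union> B)"
    unfolding local_on_def
  proof (intro conjI allI impI)
    show "finite (J \<union> K)"
      using J K by (simp add: local_on_def)
    fix \<sigma> \<tau> :: "'e config"
    assume "\<forall>i\<in>J \<union> K. \<sigma> i = \<tau> i"
    then have "(\<sigma> \<in> A) = (\<tau> \<in> A)" "(\<sigma> \<in> B) = (\<tau> \<in> B)"
      using J K unfolding local_on_def by blast+
    then show "(\<sigma> \<in> A \<union> B) = (\<tau> \<in> A \<union> B)"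
      by blast
  qed
  then show "A \<union> B \<in> cylinder_sets"
    by (auto simp: cylinder_sets_def)
qed simp

lemma cylinder_sets_measurable:
  assumes "A \<in> cylinder_sets"
  shows "A \<in> sets (Xspace :: ('e::finite) config measure)"
proof -
  obtain J where "local_on J (\<lambda>\<sigma>::'e config. \<sigma> \<in> A)"
    using assms by (auto simp: cylinder_sets_def)
  then have "local_on J (indicator A :: 'e config \<Rightarrow> real)"
    by (rule local_on_indicator)
  then have "(indicator A :: 'e config \<Rightarrow> real) \<in> borel_measurable Xspace"
    by (rule local_on_measurable)
  then show ?thesis
    by (simp add: borel_measurable_indicator_iff)
qed

lemma sets_Xspace_eq_sigma_cylinder_sets:
  "sets (Xspace :: ('e::finite) config measure) = sigma_sets UNIV cylinder_sets"
proof -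
  let ?G = "{{\<sigma>\<in>PiE UNIV (\<lambda>_. UNIV). \<sigma> i \<in> A} | (i::int) (A::'e set). True}"
  have Xspace_eq: "sets (Xspace :: 'e config measure) = sigma_sets UNIV ?G"
    unfolding Xspace_def by (simp add: sets_PiM_single)
  show ?thesis
    unfolding Xspace_eq
  proof (rule sigma_sets_eqI)
    fix B assume "B \<in> ?G"
    then obtain i A where "B = {\<sigma>. \<sigma> i \<in> A}" by auto
    then have "local_on {i} (\<lambda>\<sigma>. \<sigma> \<in> B)"
      by (simp add: local_on_def)
    then show "B \<in> sigma_sets UNIV cylinder_sets"
      by (intro sigma_sets.Basic) (auto simp: cylinder_sets_def)
  next
    fix B :: "'e config set" assume "B \<in> cylinder_sets"
    then show "B \<in> sigma_sets UNIV ?G"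
      using cylinder_sets_measurable Xspace_eq by blast
  qed
qed

definition quasilocal :: "(('e::finite) config \<Rightarrow> real) \<Rightarrow> bool" where
  "quasilocal f \<longleftrightarrow> (\<forall>\<epsilon>>0. \<exists>J h. local_on J h \<and> (\<forall>\<sigma>. \<bar>f \<sigma> - h \<sigma>\<bar> \<le> \<epsilon>))"

lemma quasilocal_uniform_limit:
  fixes f :: "('e::finite) config \<Rightarrow> real"
  assumes "quasilocal f"
  obtains h where "\<And>n. \<exists>J. local_on J (h n)" "uniform_limit UNIV h f sequentially"
proof -
  have "\<exists>h. (\<exists>J. local_on J h) \<and> (\<forall>\<sigma>. \<bar>f \<sigma> - h \<sigma>\<bar> \<le> 1 / Suc n)" for n
  proof -
    have "(0::real) < 1 / Suc n"
      by simp
    then show ?thesis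
      using assms unfolding quasilocal_def by blast
  qed
  then obtain h where loc: "\<And>n. \<exists>J. local_on J (h n)"
    and close: "\<And>n \<sigma>. \<bar>f \<sigma> - h n \<sigma>\<bar> \<le> 1 / Suc n"
    by metis
  have "uniform_limit UNIV h f sequentially"
  proof (rule uniform_limitI)
    fix e :: real
    assume "0 < e"
    then obtain N where N: "1 / Suc N < e"
      using nat_approx_posE by blast
    have "dist (h n \<sigma>) (f \<sigma>) < e" if "N \<le> n" for n \<sigma>
    proof -
      have "1 / real (Suc n) \<le> 1 / Suc N"
        using that by (simp add: frac_le)
      then show ?thesis
        using close [of \<sigma> n] N by (simp add: dist_real_def abs_minus_commute)
    qed
    then show "\<forall>\<^sub>F n in sequentially. \<forall>\<sigma>\<in>UNIV. dist (h n \<sigma>) (f \<sigma>) < e"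
      by (auto simp: eventually_sequentially)
  qed
  with loc that show ?thesis by blast
qed

lemma quasilocal_measurable:
  fixes f :: "('e::finite) config \<Rightarrow> real"
  assumes "quasilocal f"
  shows "f \<in> borel_measurable Xspace"
proof -
  obtain h where loc: "\<And>n. \<exists>J. local_on J (h n)" and lim: "uniform_limit UNIV h f sequentially"
    using quasilocal_uniform_limit [OF assms] by blast
  show ?thesis
  proof (rule borel_measurable_LIMSEQ_real)
    show "h n \<in> borel_measurable Xspace" for n
      using loc local_on_measurable by blast
    show "(\<lambda>n. h n \<sigma>) \<longlonglongrightarrow> f \<sigma>" for \<sigma>
      using tendsto_uniform_limitI [OF lim] by simp
  qed
qed

lemma quasilocal_continuous:
  fixes f :: "('e::finite) config \<Rightarrow> real"
  assumes "quasilocal f"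
  shows "continuous_map Xtop euclideanreal f"
proof -
  obtain h where loc: "\<And>n. \<exists>J. local_on J (h n)" and lim: "uniform_limit UNIV h f sequentially"
    using quasilocal_uniform_limit [OF assms] by blast
  have "continuous_map Xtop Met_TC.mtopology f"
  proof (rule Met_TC.continuous_map_uniform_limit [where F = sequentially and f = h])
    have "continuous_map Xtop euclideanreal (h n)" for n
      using loc local_on_continuous by blast
    then show "\<forall>\<^sub>F n in sequentially. continuous_map Xtop Met_TC.mtopology (h n)"
      by simp
    show "\<forall>\<^sub>F n in sequentially. \<forall>\<sigma>\<in>topspace Xtop. f \<sigma> \<in> UNIV \<and> dist (h n \<sigma>) (f \<sigma>) < \<epsilon>"
      if "0 < \<epsilon>" for \<epsilon>
      using uniform_limitD [OF lim that] by simp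
  qed simp
  then show ?thesis
    by simp
qed

section \<open>Hamiltonians\<close>

definition finite_sets_meeting :: "int set \<Rightarrow> int set set" where
  "finite_sets_meeting \<Lambda> = {V. finite V \<and> V \<inter> \<Lambda> \<noteq> {}}"

lemma hamiltonian_eq_infsum: "hamiltonian \<Phi> \<Lambda> \<sigma> = (\<Sum>\<^sub>\<infinity>V\<in>finite_sets_meeting \<Lambda>. \<Phi> V \<sigma>)"
  by (simp add: hamiltonian_def finite_sets_meeting_def)

lemma interaction_local_on: "is_interaction \<Phi> \<Longrightarrow> finite V \<Longrightarrow> local_on V (\<Phi> V)"
  by (simp add: is_interaction_def local_on_def)

lemma local_on_finite_range:
  assumes "local_on J f"
  shows "finite (range f)"
proof -
  have "range f \<subseteq> f ` PiE J (\<lambda>_. UNIV)"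
  proof
    fix x assume "x \<in> range f"
    then obtain \<sigma> where "x = f \<sigma>" by blast
    moreover have "f \<sigma> = f (restrict \<sigma> J)"
      using assms by (simp add: local_on_def)
    ultimately show "x \<in> f ` PiE J (\<lambda>_. UNIV)" by simp
  qed
  moreover have "finite J"
    using assms by (simp add: local_on_def)
  ultimately show ?thesis
    by (meson finite_PiE finite finite_imageI finite_subset)
qed

lemma abs_le_supnorm:
  assumes "local_on J f"
  shows "\<bar>f \<sigma>\<bar> \<le> supnorm f"
proof -
  have "finite (range (\<lambda>\<omega>. \<bar>f \<omega>\<bar>))"
    using finite_imageI [OF local_on_finite_range [OF assms], of abs] by (simp add: image_image)
  then show ?thesis
    unfolding supnorm_def by (intro cSUP_upper bdd_above_finite) simp_all
qed

lemma supnorm_nonneg: "local_on J f \<Longrightarrow> 0 \<le> supnorm f"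
  using abs_le_supnorm abs_ge_zero order_trans by blast

lemma UAC_summable_on_meeting:
  fixes \<Phi> :: "('e::finite) interaction"
  assumes "UAC \<Phi>" "finite \<Lambda>"
  shows "(\<lambda>V. supnorm (\<Phi> V)) summable_on finite_sets_meeting \<Lambda>"
proof -
  have sum_i: "(\<lambda>V. supnorm (\<Phi> V)) summable_on {V. finite V \<and> i \<in> V}" for i
    using assms(1) by (auto simp: UAC_def)
  have "(\<lambda>V. supnorm (\<Phi> V)) summable_on (\<Union>i\<in>\<Lambda>. {V. finite V \<and> i \<in> V})"
    using assms(2) by (induction rule: finite_induct) (auto intro: summable_on_union [OF sum_i])
  moreover have "finite_sets_meeting \<Lambda> = (\<Union>i\<in>\<Lambda>. {V. finite V \<and> i \<in> V})"
    by (auto simp: finite_sets_meeting_def)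
  ultimately show ?thesis by simp
qed

lemma interaction_summable_on_meeting:
  fixes \<Phi> :: "('e::finite) interaction"
  assumes "is_interaction \<Phi>" "UAC \<Phi>" "finite \<Lambda>" "T \<subseteq> finite_sets_meeting \<Lambda>"
  shows "(\<lambda>V. supnorm (\<Phi> V)) summable_on T" "(\<lambda>V. norm (\<Phi> V \<sigma>)) summable_on T"
    "(\<lambda>V. \<Phi> V \<sigma>) summable_on T"
proof -
  show sup: "(\<lambda>V. supnorm (\<Phi> V)) summable_on T"
    using summable_on_subset_banach [OF UAC_summable_on_meeting [OF assms(2,3)] assms(4)] .
  have "norm (\<Phi> V \<sigma>) \<le> supnorm (\<Phi> V)" if "V \<in> T" for V
    using that assms(4) abs_le_supnorm [OF interaction_local_on [OF assms(1)]]
    by (auto simp: finite_sets_meeting_def)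
  then show "(\<lambda>V. norm (\<Phi> V \<sigma>)) summable_on T"
    by (intro summable_on_comparison_test [OF sup]) auto
  then show "(\<lambda>V. \<Phi> V \<sigma>) summable_on T"
    by (rule abs_summable_summable)
qed

lemma infsum_tail_le:
  fixes w :: "'a \<Rightarrow> real"
  assumes "w summable_on S" "\<And>x. x \<in> S \<Longrightarrow> 0 \<le> w x" "0 < \<epsilon>"
  obtains F where "finite F" "F \<subseteq> S" "\<And>T. T \<subseteq> S - F \<Longrightarrow> infsum w T \<le> \<epsilon>"
proof -
  have "\<forall>\<^sub>F F in finite_subsets_at_top S. dist (sum w F) (infsum w S) < \<epsilon>"
    using tendstoD [OF infsum_tendsto [OF assms(1)] assms(3)] .
  then obtain F where F: "finite F" "F \<subseteq> S" and close: "dist (sum w F) (infsum w S) < \<epsilon>"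
    unfolding eventually_finite_subsets_at_top by blast
  have rest: "w summable_on S - F"
    using summable_on_subset_banach [OF assms(1)] by blast
  have "infsum w S = sum w F + infsum w (S - F)"
    using infsum_Un_disjoint [OF summable_on_finite [OF F(1)] rest] F by (simp add: Un_absorb1)
  then have "infsum w (S - F) \<le> \<epsilon>"
    using close by (simp add: dist_real_def)
  moreover have "infsum w T \<le> infsum w (S - F)" if "T \<subseteq> S - F" for T
    using that assms(2) by (intro infsum_mono2 rest summable_on_subset_banach [OF rest]) auto
  ultimately show ?thesis
    by (intro that [OF F]) (meson order_trans)
qed

definition remove_sets :: "int set set \<Rightarrow> ('e::finite) interaction \<Rightarrow> 'e interaction" where
  "remove_sets T \<Phi> V = (if V \<in> T then (\<lambda>_. 0) else \<Phi> V)"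

lemma is_interaction_remove_sets: "is_interaction \<Phi> \<Longrightarrow> is_interaction (remove_sets T \<Phi>)"
  unfolding is_interaction_def remove_sets_def by auto

lemma UAC_remove_sets:
  fixes \<Phi> :: "('e::finite) interaction"
  assumes "is_interaction \<Phi>" "UAC \<Phi>"
  shows "UAC (remove_sets T \<Phi>)"
proof -
  obtain C where sum_i: "\<And>i. (\<lambda>V. supnorm (\<Phi> V)) summable_on {V. finite V \<and> i \<in> V}"
    and bound: "\<And>i. (\<Sum>\<^sub>\<infinity>V\<in>{V. finite V \<and> i \<in> V}. supnorm (\<Phi> V)) \<le> C"
    using assms(2) unfolding UAC_def by blast
  have le: "supnorm (remove_sets T \<Phi> V) \<le> supnorm (\<Phi> V)"
    and ge: "0 \<le> supnorm (remove_sets T \<Phi> V)" if "finite V" for V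
    using supnorm_nonneg [OF interaction_local_on [OF assms(1) that]]
    by (simp_all add: remove_sets_def supnorm_def)
  have sum_T: "(\<lambda>V. supnorm (remove_sets T \<Phi> V)) summable_on {V. finite V \<and> i \<in> V}" for i
    using le ge by (intro summable_on_comparison_test [OF sum_i]) auto
  have "(\<Sum>\<^sub>\<infinity>V\<in>{V. finite V \<and> i \<in> V}. supnorm (remove_sets T \<Phi> V))
      \<le> (\<Sum>\<^sub>\<infinity>V\<in>{V. finite V \<and> i \<in> V}. supnorm (\<Phi> V))" for i
    using le by (intro infsum_mono [OF sum_T sum_i]) simp
  then have "(\<Sum>\<^sub>\<infinity>V\<in>{V. finite V \<and> i \<in> V}. supnorm (remove_sets T \<Phi> V)) \<le> C" for i
    using bound [of i] by (meson order_trans)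
  with sum_T show ?thesis
    unfolding UAC_def by blast
qed

lemma abs_hamiltonian_remove_sets_le:
  fixes \<Phi> :: "('e::finite) interaction"
  assumes "is_interaction \<Phi>" "UAC \<Phi>" "finite \<Lambda>"
  shows "\<bar>hamiltonian \<Phi> \<Lambda> \<sigma> - hamiltonian (remove_sets T \<Phi>) \<Lambda> \<sigma>\<bar>
           \<le> (\<Sum>\<^sub>\<infinity>V\<in>finite_sets_meeting \<Lambda> \<inter> T. supnorm (\<Phi> V))"
proof -
  let ?S = "finite_sets_meeting \<Lambda>"
  note summable = interaction_summable_on_meeting [OF assms]
  have "hamiltonian (remove_sets T \<Phi>) \<Lambda> \<sigma> = (\<Sum>\<^sub>\<infinity>V\<in>?S - T. \<Phi> V \<sigma>)"
    unfolding hamiltonian_eq_infsum by (rule infsum_cong_neutral) (auto simp: remove_sets_def)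
  moreover have "hamiltonian \<Phi> \<Lambda> \<sigma> = (\<Sum>\<^sub>\<infinity>V\<in>?S \<inter> T. \<Phi> V \<sigma>) + (\<Sum>\<^sub>\<infinity>V\<in>?S - T. \<Phi> V \<sigma>)"
    unfolding hamiltonian_eq_infsum
    by (subst infsum_Un_disjoint [symmetric]) (auto intro: summable(3) simp: Int_Diff_Un)
  ultimately have "\<bar>hamiltonian \<Phi> \<Lambda> \<sigma> - hamiltonian (remove_sets T \<Phi>) \<Lambda> \<sigma>\<bar>
      = norm (\<Sum>\<^sub>\<infinity>V\<in>?S \<inter> T. \<Phi> V \<sigma>)"
    by simp
  also have "\<dots> \<le> (\<Sum>\<^sub>\<infinity>V\<in>?S \<inter> T. norm (\<Phi> V \<sigma>))"
    by (rule norm_infsum_bound) (rule summable(2), blast)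
  also have "\<dots> \<le> (\<Sum>\<^sub>\<infinity>V\<in>?S \<inter> T. supnorm (\<Phi> V))"
    using abs_le_supnorm [OF interaction_local_on [OF assms(1)]]
    by (intro infsum_mono summable(1,2)) (auto simp: finite_sets_meeting_def)
  finally show ?thesis .
qed

lemma hamiltonian_remove_sets_error:
  fixes \<Phi> :: "('e::finite) interaction"
  assumes "is_interaction \<Phi>" "UAC \<Phi>" "finite \<Lambda>" "0 < \<epsilon>"
  obtains F where "finite F" "F \<subseteq> finite_sets_meeting \<Lambda>"
    "\<And>T \<sigma>. F \<inter> T = {} \<Longrightarrow> \<bar>hamiltonian \<Phi> \<Lambda> \<sigma> - hamiltonian (remove_sets T \<Phi>) \<Lambda> \<sigma>\<bar> \<le> \<epsilon>"
proof -
  have "0 \<le> supnorm (\<Phi> V)" if "V \<in> finite_sets_meeting \<Lambda>" for V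
    using that supnorm_nonneg [OF interaction_local_on [OF assms(1)]]
    by (simp add: finite_sets_meeting_def)
  then obtain F where F: "finite F" "F \<subseteq> finite_sets_meeting \<Lambda>"
    and tail: "\<And>T. T \<subseteq> finite_sets_meeting \<Lambda> - F \<Longrightarrow> (\<Sum>\<^sub>\<infinity>V\<in>T. supnorm (\<Phi> V)) \<le> \<epsilon>"
    using infsum_tail_le [OF UAC_summable_on_meeting [OF assms(2,3)] _ assms(4)] by blast
  have "\<bar>hamiltonian \<Phi> \<Lambda> \<sigma> - hamiltonian (remove_sets T \<Phi>) \<Lambda> \<sigma>\<bar> \<le> \<epsilon>"
    if "F \<inter> T = {}" for T \<sigma>
  proof -
    have "\<bar>hamiltonian \<Phi> \<Lambda> \<sigma> - hamiltonian (remove_sets T \<Phi>) \<Lambda> \<sigma>\<bar>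
        \<le> (\<Sum>\<^sub>\<infinity>V\<in>finite_sets_meeting \<Lambda> \<inter> T. supnorm (\<Phi> V))"
      by (rule abs_hamiltonian_remove_sets_le [OF assms(1-3)])
    also have "\<dots> \<le> \<epsilon>"
      using that by (intro tail) blast
    finally show ?thesis .
  qed
  then show ?thesis
    by (rule that [OF F])
qed

lemma hamiltonian_quasilocal:
  fixes \<Phi> :: "('e::finite) interaction"
  assumes "is_interaction \<Phi>" "UAC \<Phi>" "finite \<Lambda>"
  shows "quasilocal (hamiltonian \<Phi> \<Lambda>)"
  unfolding quasilocal_def
proof (intro allI impI)
  fix \<epsilon> :: real
  assume "0 < \<epsilon>"
  then obtain F where F: "finite F" "F \<subseteq> finite_sets_meeting \<Lambda>"
    and err: "\<And>T \<sigma>. F \<inter> T = {} \<Longrightarrow>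
      \<bar>hamiltonian \<Phi> \<Lambda> \<sigma> - hamiltonian (remove_sets T \<Phi>) \<Lambda> \<sigma>\<bar> \<le> \<epsilon>"
    using hamiltonian_remove_sets_error [OF assms] by blast
  let ?H = "hamiltonian (remove_sets (- F) \<Phi>) \<Lambda>"
  have "local_on (\<Union>F) ?H"
    unfolding local_on_def
  proof (intro conjI allI impI)
    show "finite (\<Union>F)"
      using F by (auto simp: finite_sets_meeting_def)
    fix \<sigma> \<tau> :: "'e config"
    assume agree: "\<forall>i\<in>\<Union>F. \<sigma> i = \<tau> i"
    have "remove_sets (- F) \<Phi> V \<sigma> = remove_sets (- F) \<Phi> V \<tau>" for V
    proof (cases "V \<in> F")
      case True
      then have "local_on V (\<Phi> V)"
        using F interaction_local_on [OF assms(1)] by (auto simp: finite_sets_meeting_def)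
      with True agree show ?thesis
        by (auto simp: remove_sets_def local_on_def)
    qed (simp add: remove_sets_def)
    then show "?H \<sigma> = ?H \<tau>"
      by (simp add: hamiltonian_def)
  qed
  moreover have "\<bar>hamiltonian \<Phi> \<Lambda> \<sigma> - ?H \<sigma>\<bar> \<le> \<epsilon>" for \<sigma>
    by (rule err) blast
  ultimately show "\<exists>J h. local_on J h \<and> (\<forall>\<sigma>. \<bar>hamiltonian \<Phi> \<Lambda> \<sigma> - h \<sigma>\<bar> \<le> \<epsilon>)"
    by blast
qed

lemma hamiltonian_remove_sets_uniform_limit:
  fixes \<Phi> :: "('e::finite) interaction"
  assumes "is_interaction \<Phi>" "UAC \<Phi>" "finite \<Lambda>"
    and eventually_kept: "\<And>V. \<forall>\<^sub>F k in sequentially. V \<notin> T k"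
  shows "uniform_limit UNIV (\<lambda>k. hamiltonian (remove_sets (T k) \<Phi>) \<Lambda>) (hamiltonian \<Phi> \<Lambda>) sequentially"
proof (rule uniform_limitI)
  fix e :: real
  assume "0 < e"
  then have "0 < e / 2"
    by simp
  obtain F where F: "finite F" "F \<subseteq> finite_sets_meeting \<Lambda>"
    and err: "\<And>T \<sigma>. F \<inter> T = {} \<Longrightarrow>
      \<bar>hamiltonian \<Phi> \<Lambda> \<sigma> - hamiltonian (remove_sets T \<Phi>) \<Lambda> \<sigma>\<bar> \<le> e / 2"
    using hamiltonian_remove_sets_error [OF assms(1-3) \<open>0 < e / 2\<close>] by blast
  have "\<forall>\<^sub>F k in sequentially. \<forall>V\<in>F. V \<notin> T k"
    using F(1) by (rule eventually_ball_finite) (use eventually_kept in blast)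
  then show "\<forall>\<^sub>F k in sequentially. \<forall>\<sigma>\<in>UNIV.
      dist (hamiltonian (remove_sets (T k) \<Phi>) \<Lambda> \<sigma>) (hamiltonian \<Phi> \<Lambda> \<sigma>) < e"
  proof eventually_elim
    case (elim k)
    then have disjoint: "F \<inter> T k = {}"
      by blast
    show ?case
    proof
      fix \<sigma> :: "'e config"
      have "\<bar>hamiltonian \<Phi> \<Lambda> \<sigma> - hamiltonian (remove_sets (T k) \<Phi>) \<Lambda> \<sigma>\<bar> \<le> e / 2"
        by (rule err [OF disjoint])
      then show "dist (hamiltonian (remove_sets (T k) \<Phi>) \<Lambda> \<sigma>) (hamiltonian \<Phi> \<Lambda> \<sigma>) < e"
        using \<open>0 < e\<close> by (simp add: dist_real_def abs_minus_commute)
    qed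
  qed
qed

lemma Psi_eq_remove_sets: "Psi enum \<Phi> k = remove_sets (enum ` {i. k + 1 \<le> i}) \<Phi>"
  by (simp add: fun_eq_iff Psi_def remove_sets_def)

lemma eventually_not_in_enum_tail:
  assumes "inj_on enum {i. 1 \<le> i}"
  shows "\<forall>\<^sub>F k in sequentially. V \<notin> enum ` {i. k + 1 \<le> i}"
proof (cases "\<exists>i\<ge>1. enum i = V")
  case True
  then obtain i where i: "1 \<le> i" "enum i = V"
    by blast
  have "V \<notin> enum ` {j. k + 1 \<le> j}" if "i \<le> k" for k
  proof
    assume "V \<in> enum ` {j. k + 1 \<le> j}"
    then obtain j where j: "k + 1 \<le> j" "enum j = V"
      by blast
    then have "j = i"
      using i inj_onD [OF assms, of j i] by simp
    with j that show False
      by simp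
  qed
  then show ?thesis
    by (auto simp: eventually_sequentially)
next
  case False
  have "V \<notin> enum ` {j. k + 1 \<le> j}" for k
  proof
    assume "V \<in> enum ` {j. k + 1 \<le> j}"
    then obtain j where "k + 1 \<le> j" "enum j = V"
      by blast
    with False show False
      by simp
  qed
  then show ?thesis
    by simp
qed

section \<open>The Gibbs kernel of a Hamiltonian\<close>

definition merge_on :: "int set \<Rightarrow> ('e::finite) config \<Rightarrow> 'e config \<Rightarrow> 'e config" where
  "merge_on \<Lambda> \<omega> \<eta> = (\<lambda>i. if i \<in> \<Lambda> then \<omega> i else \<eta> i)"

definition gibbs_kernel ::
    "(('e::finite) config \<Rightarrow> real) \<Rightarrow> int set \<Rightarrow> 'e config set \<Rightarrow> 'e config \<Rightarrow> real" where
  "gibbs_kernel H \<Lambda> A \<eta> =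
     (\<Sum>\<sigma>\<in>agree_off \<Lambda> \<eta>. indicator A \<sigma> * exp (- H \<sigma>)) / (\<Sum>\<sigma>\<in>agree_off \<Lambda> \<eta>. exp (- H \<sigma>))"

lemma gibbs_spec_eq_gibbs_kernel: "gibbs_spec \<Phi> \<Lambda> = gibbs_kernel (hamiltonian \<Phi> \<Lambda>) \<Lambda>"
  by (simp add: fun_eq_iff gibbs_spec_def gibbs_kernel_def)

lemma agree_off_eq_merge_on_image: "agree_off \<Lambda> \<eta> = (\<lambda>\<omega>. merge_on \<Lambda> \<omega> \<eta>) ` PiE \<Lambda> (\<lambda>_. UNIV)"
proof
  show "agree_off \<Lambda> \<eta> \<subseteq> (\<lambda>\<omega>. merge_on \<Lambda> \<omega> \<eta>) ` PiE \<Lambda> (\<lambda>_. UNIV)"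
  proof
    fix \<sigma> assume "\<sigma> \<in> agree_off \<Lambda> \<eta>"
    then have "\<sigma> = merge_on \<Lambda> (restrict \<sigma> \<Lambda>) \<eta>"
      by (auto simp: agree_off_def merge_on_def fun_eq_iff)
    moreover have "restrict \<sigma> \<Lambda> \<in> PiE \<Lambda> (\<lambda>_. UNIV)"
      by simp
    ultimately show "\<sigma> \<in> (\<lambda>\<omega>. merge_on \<Lambda> \<omega> \<eta>) ` PiE \<Lambda> (\<lambda>_. UNIV)"
      by (rule image_eqI)
  qed
  show "(\<lambda>\<omega>. merge_on \<Lambda> \<omega> \<eta>) ` PiE \<Lambda> (\<lambda>_. UNIV) \<subseteq> agree_off \<Lambda> \<eta>"
    by (auto simp: agree_off_def merge_on_def)
qed

lemma inj_on_merge_on: "inj_on (\<lambda>\<omega>. merge_on \<Lambda> \<omega> \<eta>) (PiE \<Lambda> (\<lambda>_. UNIV))"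
proof (rule inj_onI)
  fix \<omega> \<omega>' assume "\<omega> \<in> PiE \<Lambda> (\<lambda>_. UNIV)" "\<omega>' \<in> PiE \<Lambda> (\<lambda>_. UNIV)"
    and "merge_on \<Lambda> \<omega> \<eta> = merge_on \<Lambda> \<omega>' \<eta>"
  then show "\<omega> = \<omega>'"
    by (auto simp: merge_on_def fun_eq_iff PiE_def extensional_def) metis
qed

lemma sum_agree_off_eq_sum_merge_on:
  "(\<Sum>\<sigma>\<in>agree_off \<Lambda> \<eta>. g \<sigma>) = (\<Sum>\<omega>\<in>PiE \<Lambda> (\<lambda>_. UNIV). g (merge_on \<Lambda> \<omega> \<eta>))"
  unfolding agree_off_eq_merge_on_image by (simp add: sum.reindex [OF inj_on_merge_on])

lemma finite_agree_off: "finite \<Lambda> \<Longrightarrow> finite (agree_off \<Lambda> (\<eta>::('e::finite) config))"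
  unfolding agree_off_eq_merge_on_image by (intro finite_imageI finite_PiE) auto

lemma partition_function_pos:
  fixes H :: "('e::finite) config \<Rightarrow> real"
  assumes "finite \<Lambda>"
  shows "0 < (\<Sum>\<sigma>\<in>agree_off \<Lambda> \<eta>. exp (- H \<sigma>))"
  by (rule sum_pos2 [OF finite_agree_off [OF assms], of \<eta>]) (auto simp: agree_off_def)

lemma gibbs_kernel_nonneg: "0 \<le> gibbs_kernel H \<Lambda> A \<eta>"
  unfolding gibbs_kernel_def by (intro divide_nonneg_nonneg sum_nonneg) auto

lemma gibbs_kernel_le_1: "gibbs_kernel H \<Lambda> A \<eta> \<le> 1"
proof -
  let ?Z = "\<Sum>\<sigma>\<in>agree_off \<Lambda> \<eta>. exp (- H \<sigma>)"
  have "(\<Sum>\<sigma>\<in>agree_off \<Lambda> \<eta>. indicator A \<sigma> * exp (- H \<sigma>)) \<le> ?Z"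
    by (intro sum_mono) (simp add: indicator_def)
  moreover have "0 \<le> ?Z"
    by (intro sum_nonneg) simp
  ultimately show ?thesis
    unfolding gibbs_kernel_def by (cases "?Z = 0") (simp_all add: divide_le_eq_1)
qed

lemma abs_gibbs_kernel_le_1: "\<bar>gibbs_kernel H \<Lambda> A \<eta>\<bar> \<le> 1"
  using gibbs_kernel_nonneg [of H \<Lambda> A \<eta>] gibbs_kernel_le_1 [of H \<Lambda> A \<eta>] by simp

text \<open>The relative change of \<open>a / b\<close> is at most \<open>e\<^sup>2\<^sup>c - 1\<close>; since \<open>a \<le> b\<close>, so is the absolute one.\<close>
lemma abs_ratio_perturbation_le:
  fixes a b a' b' c :: real
  assumes "0 < b" "0 \<le> a" "a \<le> b" "0 \<le> c"
    and "a' \<le> exp c * a" "exp (- c) * a \<le> a'" "b' \<le> exp c * b" "exp (- c) * b \<le> b'"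
  shows "\<bar>a' / b' - a / b\<bar> \<le> exp (2 * c) - 1"
proof -
  define p where "p = a / b"
  have p: "0 \<le> p" "p \<le> 1"
    using assms by (auto simp: p_def)
  have b': "0 < b'"
    using assms(1,8) by (meson exp_gt_zero mult_pos_pos order_less_le_trans)
  have a': "0 \<le> a'"
    using assms(2,6) by (meson exp_ge_zero mult_nonneg_nonneg order_trans)
  have "a' / b' \<le> (exp c * a) / (exp (- c) * b)"
    using assms b' a' by (intro frac_le) auto
  also have "\<dots> = exp (2 * c) * p"
    by (simp add: p_def exp_minus field_simps flip: exp_add)
  finally have up: "a' / b' - p \<le> (exp (2 * c) - 1) * p"
    by (simp add: algebra_simps)
  have "exp (- (2 * c)) * p = (exp (- c) * a) / (exp c * b)"
    by (simp add: p_def exp_minus field_simps flip: exp_add)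
  also have "\<dots> \<le> a' / b'"
    using assms b' a' by (intro frac_le) auto
  finally have lo: "p - a' / b' \<le> (1 - exp (- (2 * c))) * p"
    by (simp add: algebra_simps)
  have "(exp (2 * c) - 1) * p \<le> exp (2 * c) - 1"
    using p assms(4) by (intro mult_left_le) auto
  moreover have "(1 - exp (- (2 * c))) * p \<le> 1 - exp (- (2 * c))"
    using p assms(4) by (intro mult_left_le) auto
  moreover have "1 - exp (- (2 * c)) \<le> exp (2 * c) - 1"
    using exp_ge_add_one_self [of "2 * c"] exp_ge_add_one_self [of "- (2 * c)"] by linarith
  ultimately show ?thesis
    using up lo unfolding p_def by linarith
qed

lemma abs_gibbs_kernel_diff_le:
  fixes H H' :: "('e::finite) config \<Rightarrow> real"
  assumes "finite \<Lambda>" "\<And>\<sigma>. \<bar>H \<sigma> - H' \<sigma>\<bar> \<le> c"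
  shows "\<bar>gibbs_kernel H' \<Lambda> A \<eta> - gibbs_kernel H \<Lambda> A \<eta>\<bar> \<le> exp (2 * c) - 1"
proof -
  let ?S = "agree_off \<Lambda> \<eta>"
  have up: "exp (- H' \<sigma>) \<le> exp c * exp (- H \<sigma>)" and down: "exp (- c) * exp (- H \<sigma>) \<le> exp (- H' \<sigma>)"
    for \<sigma>
    using assms(2) [of \<sigma>] by (simp_all flip: exp_add)
  show ?thesis
    unfolding gibbs_kernel_def
  proof (rule abs_ratio_perturbation_le)
    show "0 < (\<Sum>\<sigma>\<in>?S. exp (- H \<sigma>))"
      by (rule partition_function_pos [OF assms(1)])
    show "0 \<le> c"
      using assms(2) [of \<eta>] by simp
    show "0 \<le> (\<Sum>\<sigma>\<in>?S. indicator A \<sigma> * exp (- H \<sigma>))"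
      by (intro sum_nonneg) simp
    show "(\<Sum>\<sigma>\<in>?S. indicator A \<sigma> * exp (- H \<sigma>)) \<le> (\<Sum>\<sigma>\<in>?S. exp (- H \<sigma>))"
      by (intro sum_mono) (simp add: indicator_def)
    show "(\<Sum>\<sigma>\<in>?S. indicator A \<sigma> * exp (- H' \<sigma>)) \<le> exp c * (\<Sum>\<sigma>\<in>?S. indicator A \<sigma> * exp (- H \<sigma>))"
      "exp (- c) * (\<Sum>\<sigma>\<in>?S. indicator A \<sigma> * exp (- H \<sigma>)) \<le> (\<Sum>\<sigma>\<in>?S. indicator A \<sigma> * exp (- H' \<sigma>))"
      "(\<Sum>\<sigma>\<in>?S. exp (- H' \<sigma>)) \<le> exp c * (\<Sum>\<sigma>\<in>?S. exp (- H \<sigma>))"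
      "exp (- c) * (\<Sum>\<sigma>\<in>?S. exp (- H \<sigma>)) \<le> (\<Sum>\<sigma>\<in>?S. exp (- H' \<sigma>))"
      unfolding sum_distrib_left using up down by (auto intro!: sum_mono simp: indicator_def)
  qed
qed

lemma gibbs_kernel_eq_sum_merge_on:
  "gibbs_kernel H \<Lambda> A \<eta> =
    (\<Sum>\<omega>\<in>PiE \<Lambda> (\<lambda>_. UNIV). indicator A (merge_on \<Lambda> \<omega> \<eta>) * exp (- H (merge_on \<Lambda> \<omega> \<eta>))) /
    (\<Sum>\<omega>\<in>PiE \<Lambda> (\<lambda>_. UNIV). exp (- H (merge_on \<Lambda> \<omega> \<eta>)))"
  unfolding gibbs_kernel_def sum_agree_off_eq_sum_merge_on ..

lemma merge_on_measurable: "(\<lambda>\<eta>. merge_on \<Lambda> \<omega> \<eta>) \<in> Xspace \<rightarrow>\<^sub>M (Xspace :: ('e::finite) config measure)"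
proof -
  have "(\<lambda>\<eta> i. if i \<in> \<Lambda> then \<omega> i else \<eta> i)
      \<in> Xspace \<rightarrow>\<^sub>M PiM UNIV (\<lambda>_::int. count_space (UNIV::'e set))"
  proof (rule measurable_PiM_single')
    show "(\<lambda>\<eta>::'e config. if i \<in> \<Lambda> then \<omega> i else \<eta> i) \<in> Xspace \<rightarrow>\<^sub>M count_space UNIV" for i
      unfolding Xspace_def by (cases "i \<in> \<Lambda>") (simp_all add: measurable_component_singleton)
  qed (simp add: space_PiM)
  then show ?thesis
    unfolding merge_on_def [abs_def] Xspace_def [symmetric] .
qed

lemma gibbs_kernel_measurable:
  fixes H :: "('e::finite) config \<Rightarrow> real"
  assumes "H \<in> borel_measurable Xspace" "A \<in> sets Xspace"
  shows "gibbs_kernel H \<Lambda> A \<in> borel_measurable Xspace"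
proof -
  have "(\<lambda>\<eta>. H (merge_on \<Lambda> \<omega> \<eta>)) \<in> borel_measurable Xspace"
    and "(\<lambda>\<eta>. indicator A (merge_on \<Lambda> \<omega> \<eta>) :: real) \<in> borel_measurable Xspace" for \<omega>
    using measurable_compose [OF merge_on_measurable assms(1)]
      measurable_compose [OF merge_on_measurable borel_measurable_indicator [OF assms(2)]]
    by auto
  then show ?thesis
    unfolding gibbs_kernel_eq_sum_merge_on [abs_def] by measurable
qed

lemma local_on_gibbs_kernel:
  assumes "local_on J H" "local_on K (\<lambda>\<sigma>::('e::finite) config. \<sigma> \<in> A)"
  shows "local_on (J \<union> K) (gibbs_kernel H \<Lambda> A)"
  unfolding local_on_def
proof (intro conjI allI impI)
  show "finite (J \<union> K)"
    using assms by (simp add: local_on_def)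
  fix \<eta> \<eta>' :: "'e config"
  assume "\<forall>i\<in>J \<union> K. \<eta> i = \<eta>' i"
  then have agree: "\<forall>i\<in>J \<union> K. merge_on \<Lambda> \<omega> \<eta> i = merge_on \<Lambda> \<omega> \<eta>' i" for \<omega>
    by (simp add: merge_on_def)
  have "H (merge_on \<Lambda> \<omega> \<eta>) = H (merge_on \<Lambda> \<omega> \<eta>')" "(merge_on \<Lambda> \<omega> \<eta> \<in> A) = (merge_on \<Lambda> \<omega> \<eta>' \<in> A)" for \<omega>
    using assms agree [of \<omega>] unfolding local_on_def by blast+
  then show "gibbs_kernel H \<Lambda> A \<eta> = gibbs_kernel H \<Lambda> A \<eta>'"
    unfolding gibbs_kernel_eq_sum_merge_on by (simp add: indicator_def)
qed

lemma quasilocal_gibbs_kernel: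
  fixes H :: "('e::finite) config \<Rightarrow> real"
  assumes "quasilocal H" "finite \<Lambda>" "A \<in> cylinder_sets"
  shows "quasilocal (gibbs_kernel H \<Lambda> A)"
  unfolding quasilocal_def
proof (intro allI impI)
  fix \<epsilon> :: real
  assume "0 < \<epsilon>"
  define \<delta> where "\<delta> = ln (1 + \<epsilon>) / 2"
  have "0 < \<delta>" and \<delta>: "exp (2 * \<delta>) - 1 = \<epsilon>"
    using \<open>0 < \<epsilon>\<close> by (simp_all add: \<delta>_def)
  then obtain J h where h: "local_on J h" "\<And>\<sigma>. \<bar>H \<sigma> - h \<sigma>\<bar> \<le> \<delta>"
    using assms(1) unfolding quasilocal_def by blast
  obtain K where K: "local_on K (\<lambda>\<sigma>. \<sigma> \<in> A)"
    using assms(3) by (auto simp: cylinder_sets_def)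
  have "\<bar>gibbs_kernel H \<Lambda> A \<eta> - gibbs_kernel h \<Lambda> A \<eta>\<bar> \<le> \<epsilon>" for \<eta>
    using abs_gibbs_kernel_diff_le [OF assms(2) h(2), where A = A and \<eta> = \<eta>] \<delta>
    by (simp add: abs_minus_commute)
  with local_on_gibbs_kernel [OF h(1) K] show "\<exists>J h. local_on J h \<and> (\<forall>\<eta>. \<bar>gibbs_kernel H \<Lambda> A \<eta> - h \<eta>\<bar> \<le> \<epsilon>)"
    by blast
qed

lemma uniform_limit_gibbs_kernel:
  fixes H :: "('e::finite) config \<Rightarrow> real"
  assumes "finite \<Lambda>" and lim: "uniform_limit UNIV Hs H sequentially"
  shows "uniform_limit UNIV (\<lambda>k. gibbs_kernel (Hs k) \<Lambda> A) (gibbs_kernel H \<Lambda> A) sequentially"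
proof (rule uniform_limitI)
  fix e :: real
  assume "0 < e"
  define \<delta> where "\<delta> = ln (1 + e / 2) / 2"
  have "0 < \<delta>" and \<delta>: "exp (2 * \<delta>) - 1 = e / 2"
    using \<open>0 < e\<close> by (simp_all add: \<delta>_def)
  from uniform_limitD [OF lim \<open>0 < \<delta>\<close>]
  show "\<forall>\<^sub>F k in sequentially. \<forall>\<eta>\<in>UNIV. dist (gibbs_kernel (Hs k) \<Lambda> A \<eta>) (gibbs_kernel H \<Lambda> A \<eta>) < e"
  proof eventually_elim
    case (elim k)
    then have "\<bar>H \<sigma> - Hs k \<sigma>\<bar> \<le> \<delta>" for \<sigma>
      by (simp add: dist_real_def abs_minus_commute less_imp_le)
    then have bound: "\<bar>gibbs_kernel (Hs k) \<Lambda> A \<eta> - gibbs_kernel H \<Lambda> A \<eta>\<bar> \<le> exp (2 * \<delta>) - 1"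
      for \<eta>
      by (rule abs_gibbs_kernel_diff_le [OF assms(1)])
    have "dist (gibbs_kernel (Hs k) \<Lambda> A \<eta>) (gibbs_kernel H \<Lambda> A \<eta>) < e" for \<eta>
      using bound [of \<eta>] \<delta> \<open>0 < e\<close> by (simp add: dist_real_def)
    then show ?case
      by blast
  qed
qed

lemma gibbs_kernel_empty [simp]: "gibbs_kernel H \<Lambda> {} \<eta> = 0"
  by (simp add: gibbs_kernel_def)

lemma gibbs_kernel_Diff_UNIV:
  fixes H :: "('e::finite) config \<Rightarrow> real"
  assumes "finite \<Lambda>"
  shows "gibbs_kernel H \<Lambda> (UNIV - A) \<eta> = 1 - gibbs_kernel H \<Lambda> A \<eta>"
proof -
  let ?S = "agree_off \<Lambda> \<eta>"
  have "(\<Sum>\<sigma>\<in>?S. indicator (UNIV - A) \<sigma> * exp (- H \<sigma>))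
      = (\<Sum>\<sigma>\<in>?S. exp (- H \<sigma>)) - (\<Sum>\<sigma>\<in>?S. indicator A \<sigma> * exp (- H \<sigma>))"
    unfolding sum_subtractf [symmetric] by (intro sum.cong) (auto simp: indicator_def)
  then show ?thesis
    using partition_function_pos [OF assms, of H \<eta>] by (simp add: gibbs_kernel_def diff_divide_distrib)
qed

lemma gibbs_kernel_sums:
  assumes "disjoint_family A"
  shows "(\<lambda>i. gibbs_kernel H \<Lambda> (A i) \<eta>) sums gibbs_kernel H \<Lambda> (\<Union>i. A i) \<eta>"
proof -
  have "(\<lambda>i. indicator (A i) \<sigma> :: real) sums indicator (\<Union>i. A i) \<sigma>" for \<sigma>
    using assms by (intro indicator_sums) (auto simp: disjoint_family_on_def)
  then have "(\<lambda>i. \<Sum>\<sigma>\<in>agree_off \<Lambda> \<eta>. indicator (A i) \<sigma> * exp (- H \<sigma>))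
      sums (\<Sum>\<sigma>\<in>agree_off \<Lambda> \<eta>. indicator (\<Union>i. A i) \<sigma> * exp (- H \<sigma>))"
    by (intro sums_sum sums_mult2)
  then show ?thesis
    unfolding gibbs_kernel_def by (rule sums_divide)
qed

section \<open>Weak* limits of Gibbs measures\<close>

lemma integrable_bounded_Xspace:
  fixes f :: "('e::finite) config \<Rightarrow> real"
  assumes "finite_measure M" "sets M = sets Xspace" "f \<in> borel_measurable Xspace" "\<And>x. \<bar>f x\<bar> \<le> B"
  shows "integrable M f"
proof -
  interpret finite_measure M by fact
  have "f \<in> borel_measurable M"
    using assms(3) by (simp add: measurable_cong_sets [OF assms(2) refl])
  then show ?thesis
    using assms(4) by (intro integrable_const_bound [where B = B]) auto
qed

lemma integrable_gibbs_kernel: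
  fixes H :: "('e::finite) config \<Rightarrow> real"
  assumes "finite_measure M" "sets M = sets Xspace" "H \<in> borel_measurable Xspace" "A \<in> sets Xspace"
  shows "integrable M (gibbs_kernel H \<Lambda> A)"
  using assms(1,2) gibbs_kernel_measurable [OF assms(3,4)] abs_gibbs_kernel_le_1
  by (rule integrable_bounded_Xspace)

lemma abs_integral_diff_le:
  fixes f g :: "'a \<Rightarrow> real"
  assumes "prob_space M" "integrable M f" "integrable M g" "\<And>x. \<bar>f x - g x\<bar> \<le> e"
  shows "\<bar>(\<integral>x. f x \<partial>M) - (\<integral>x. g x \<partial>M)\<bar> \<le> e"
proof -
  interpret prob_space M by fact
  have "\<bar>(\<integral>x. f x \<partial>M) - (\<integral>x. g x \<partial>M)\<bar> = \<bar>\<integral>x. f x - g x \<partial>M\<bar>"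
    using assms(2,3) by simp
  also have "\<dots> \<le> (\<integral>x. \<bar>f x - g x\<bar> \<partial>M)"
    using integral_norm_bound [of M "\<lambda>x. f x - g x"] by simp
  also have "\<dots> \<le> (\<integral>x. e \<partial>M)"
    using assms by (intro integral_mono) auto
  also have "\<dots> = e"
    by (simp add: prob_space)
  finally show ?thesis .
qed

lemma emeasure_eq_nn_integral_iff_measure_eq_integral:
  fixes g :: "'a \<Rightarrow> real"
  assumes "finite_measure M" "integrable M g" "\<And>x. 0 \<le> g x"
  shows "emeasure M A = (\<integral>\<^sup>+x. ennreal (g x) \<partial>M) \<longleftrightarrow> measure M A = (\<integral>x. g x \<partial>M)"
proof -
  interpret finite_measure M by fact
  have "(\<integral>\<^sup>+x. ennreal (g x) \<partial>M) = ennreal (\<integral>x. g x \<partial>M)"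
    using assms(2,3) by (intro nn_integral_eq_integral) auto
  moreover have "0 \<le> (\<integral>x. g x \<partial>M)"
    using assms(3) by simp
  ultimately show ?thesis
    by (simp add: emeasure_eq_measure)
qed

lemma gibbs_measure_iff:
  fixes \<Phi> :: "('e::finite) interaction"
  assumes "is_interaction \<Phi>" "UAC \<Phi>"
  shows "gibbs_measure \<Phi> \<mu> \<longleftrightarrow> sets \<mu> = sets Xspace \<and> prob_space \<mu> \<and>
    (\<forall>\<Lambda> A. finite \<Lambda> \<longrightarrow> A \<in> sets Xspace \<longrightarrow>
       measure \<mu> A = (\<integral>\<eta>. gibbs_kernel (hamiltonian \<Phi> \<Lambda>) \<Lambda> A \<eta> \<partial>\<mu>))"
proof -
  have "emeasure \<mu> A = (\<integral>\<^sup>+\<eta>. ennreal (gibbs_kernel (hamiltonian \<Phi> \<Lambda>) \<Lambda> A \<eta>) \<partial>\<mu>)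
      \<longleftrightarrow> measure \<mu> A = (\<integral>\<eta>. gibbs_kernel (hamiltonian \<Phi> \<Lambda>) \<Lambda> A \<eta> \<partial>\<mu>)"
    if \<mu>: "sets \<mu> = sets Xspace" "prob_space \<mu>" and "finite \<Lambda>" "A \<in> sets Xspace" for \<Lambda> A
  proof (rule emeasure_eq_nn_integral_iff_measure_eq_integral)
    show "finite_measure \<mu>"
      using \<mu>(2) by (rule prob_space.finite_measure)
    show "integrable \<mu> (gibbs_kernel (hamiltonian \<Phi> \<Lambda>) \<Lambda> A)"
      using \<open>finite \<Lambda>\<close> \<open>A \<in> sets Xspace\<close>
      by (intro integrable_gibbs_kernel [OF \<open>finite_measure \<mu>\<close> \<mu>(1)] quasilocal_measurable
          hamiltonian_quasilocal assms)
  qed (rule gibbs_kernel_nonneg)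
  then show ?thesis
    unfolding gibbs_measure_def gibbs_spec_eq_gibbs_kernel by auto
qed

lemma DLR_equation_disjoint_UNION:
  fixes H :: "('e::finite) config \<Rightarrow> real" and B :: "nat \<Rightarrow> 'e config set"
  assumes \<mu>: "finite_measure \<mu>" "sets \<mu> = sets Xspace" and H: "H \<in> borel_measurable Xspace"
    and disjoint: "disjoint_family B" and B: "\<And>i. B i \<in> sets Xspace"
    and DLR: "\<And>i. measure \<mu> (B i) = (\<integral>\<eta>. gibbs_kernel H \<Lambda> (B i) \<eta> \<partial>\<mu>)"
  shows "measure \<mu> (\<Union>i. B i) = (\<integral>\<eta>. gibbs_kernel H \<Lambda> (\<Union>i. B i) \<eta> \<partial>\<mu>)"
proof -
  interpret finite_measure \<mu> by fact
  have measure_sums: "(\<lambda>i. measure \<mu> (B i)) sums measure \<mu> (\<Union>i. B i)"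
    using B \<mu>(2) disjoint by (intro finite_measure_UNION) auto
  have "(\<lambda>i. \<integral>\<eta>. gibbs_kernel H \<Lambda> (B i) \<eta> \<partial>\<mu>) sums (\<integral>\<eta>. (\<Sum>i. gibbs_kernel H \<Lambda> (B i) \<eta>) \<partial>\<mu>)"
  proof (rule sums_integral)
    show "integrable \<mu> (gibbs_kernel H \<Lambda> (B i))" for i
      by (rule integrable_gibbs_kernel [OF \<mu> H B])
    have "summable (\<lambda>i. gibbs_kernel H \<Lambda> (B i) \<eta>)" for \<eta>
      using gibbs_kernel_sums [OF disjoint] by (rule sums_summable)
    then show "AE \<eta> in \<mu>. summable (\<lambda>i. norm (gibbs_kernel H \<Lambda> (B i) \<eta>))"
      by (simp add: gibbs_kernel_nonneg)
    show "summable (\<lambda>i. \<integral>\<eta>. norm (gibbs_kernel H \<Lambda> (B i) \<eta>) \<partial>\<mu>)"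
      using sums_summable [OF measure_sums] DLR by (simp add: gibbs_kernel_nonneg)
  qed
  moreover have "(\<Sum>i. gibbs_kernel H \<Lambda> (B i) \<eta>) = gibbs_kernel H \<Lambda> (\<Union>i. B i) \<eta>" for \<eta>
    using gibbs_kernel_sums [OF disjoint] by (rule sums_unique [symmetric])
  moreover have "(\<lambda>i. \<integral>\<eta>. gibbs_kernel H \<Lambda> (B i) \<eta> \<partial>\<mu>) sums measure \<mu> (\<Union>i. B i)"
    using measure_sums DLR by simp
  ultimately show ?thesis
    by (simp add: sums_unique2)
qed

text \<open>Both sides are finite measures in \<open>A\<close> (the right one is \<open>\<mu>\<gamma>\<^sub>\<Lambda>\<close>), so by Dynkin's
  \<open>\<pi>\<close>-\<open>\<lambda>\<close> theorem it suffices that they agree on the cylinder sets.\<close>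
lemma DLR_equation_from_cylinder_sets:
  fixes H :: "('e::finite) config \<Rightarrow> real"
  assumes \<mu>: "prob_space \<mu>" "sets \<mu> = sets Xspace"
    and H: "H \<in> borel_measurable Xspace" and "finite \<Lambda>"
    and cylinder: "\<And>C. C \<in> cylinder_sets \<Longrightarrow> measure \<mu> C = (\<integral>\<eta>. gibbs_kernel H \<Lambda> C \<eta> \<partial>\<mu>)"
    and A: "A \<in> sets Xspace"
  shows "measure \<mu> A = (\<integral>\<eta>. gibbs_kernel H \<Lambda> A \<eta> \<partial>\<mu>)"
proof -
  interpret prob_space \<mu> by fact
  have "Int_stable (cylinder_sets :: 'e config set set)"
    by (rule algebra.Int_stable [OF cylinder_sets_algebra])
  moreover have "(cylinder_sets :: 'e config set set) \<subseteq> Pow UNIV"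
    by simp
  moreover have "A \<in> sigma_sets UNIV cylinder_sets"
    using A sets_Xspace_eq_sigma_cylinder_sets by blast
  ultimately show ?thesis
  proof (induction rule: sigma_sets_induct_disjoint)
    case (basic C)
    then show ?case
      by (rule cylinder)
  next
    case empty
    then show ?case
      by simp
  next
    case (compl B)
    then have B: "B \<in> sets Xspace"
      using sets_Xspace_eq_sigma_cylinder_sets by blast
    have "measure \<mu> (UNIV - B) = 1 - measure \<mu> B"
      using prob_compl [of B] B \<mu>(2) space_eq_UNIV_if_sets_Xspace [OF \<mu>(2)] by simp
    also have "\<dots> = (\<integral>\<eta>. 1 - gibbs_kernel H \<Lambda> B \<eta> \<partial>\<mu>)"
      using compl(2) integrable_gibbs_kernel [OF finite_measure_axioms \<mu>(2) H B] by (simp add: prob_space)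
    also have "\<dots> = (\<integral>\<eta>. gibbs_kernel H \<Lambda> (UNIV - B) \<eta> \<partial>\<mu>)"
      by (simp add: gibbs_kernel_Diff_UNIV [OF \<open>finite \<Lambda>\<close>])
    finally show ?case .
  next
    case (union B)
    then show ?case
      using sets_Xspace_eq_sigma_cylinder_sets
      by (intro DLR_equation_disjoint_UNION [OF finite_measure_axioms \<mu>(2) H]) auto
  qed
qed

lemma measure_tendsto_weak_star_cylinder:
  fixes \<nu> :: "nat \<Rightarrow> ('e::finite) config measure"
  assumes weak: "weak_star_conv \<nu> \<mu>"
    and sets: "\<And>j. sets (\<nu> j) = sets Xspace" "sets \<mu> = sets Xspace"
    and C: "C \<in> cylinder_sets"
  shows "(\<lambda>j. measure (\<nu> j) C) \<longlonglongrightarrow> measure \<mu> C"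
proof -
  obtain J where "local_on J (\<lambda>\<sigma>::'e config. \<sigma> \<in> C)"
    using C unfolding cylinder_sets_def by blast
  then have "local_on J (indicator C :: 'e config \<Rightarrow> real)"
    by (rule local_on_indicator)
  then have "continuous_map Xtop euclideanreal (indicator C :: 'e config \<Rightarrow> real)"
    by (rule local_on_continuous)
  then have "(\<lambda>j. \<integral>x. indicator C x \<partial>\<nu> j) \<longlonglongrightarrow> (\<integral>x. indicator C x \<partial>\<mu> :: real)"
    using weak unfolding weak_star_conv_def by blast
  moreover have "space (\<nu> j) = UNIV" "space \<mu> = UNIV" for j
    using sets by (simp_all add: space_eq_UNIV_if_sets_Xspace)
  ultimately show ?thesis
    by simp
qed

lemma weak_star_conv_integral_uniform_limit:
  fixes \<nu> :: "nat \<Rightarrow> ('e::finite) config measure"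
  assumes weak: "weak_star_conv \<nu> \<mu>"
    and \<nu>: "\<And>j. prob_space (\<nu> j)" "\<And>j. sets (\<nu> j) = sets Xspace"
    and g: "continuous_map Xtop euclideanreal g" "g \<in> borel_measurable Xspace" "\<And>x. \<bar>g x\<bar> \<le> B"
    and gs: "\<And>j. gs j \<in> borel_measurable Xspace" "\<And>j x. \<bar>gs j x\<bar> \<le> B"
    and lim: "uniform_limit UNIV gs g sequentially"
  shows "(\<lambda>j. \<integral>x. gs j x \<partial>\<nu> j) \<longlonglongrightarrow> (\<integral>x. g x \<partial>\<mu>)"
proof -
  have diff: "(\<lambda>j. (\<integral>x. gs j x \<partial>\<nu> j) - (\<integral>x. g x \<partial>\<nu> j)) \<longlonglongrightarrow> 0"
  proof (rule tendstoI)
    fix e :: real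
    assume "0 < e"
    then have "0 < e / 2"
      by simp
    from uniform_limitD [OF lim this]
    show "\<forall>\<^sub>F j in sequentially. dist ((\<integral>x. gs j x \<partial>\<nu> j) - (\<integral>x. g x \<partial>\<nu> j)) 0 < e"
    proof eventually_elim
      case (elim j)
      have fm: "finite_measure (\<nu> j)"
        using \<nu>(1) by (rule prob_space.finite_measure)
      have "\<bar>gs j x - g x\<bar> \<le> e / 2" for x
        using elim by (simp add: dist_real_def less_imp_le)
      then have "\<bar>(\<integral>x. gs j x \<partial>\<nu> j) - (\<integral>x. g x \<partial>\<nu> j)\<bar> \<le> e / 2"
        by (intro abs_integral_diff_le \<nu>(1) integrable_bounded_Xspace [OF fm \<nu>(2) gs]
            integrable_bounded_Xspace [OF fm \<nu>(2) g(2,3)])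
      then show ?case
        using \<open>0 < e\<close> by simp
    qed
  qed
  have g_lim: "(\<lambda>j. \<integral>x. g x \<partial>\<nu> j) \<longlonglongrightarrow> (\<integral>x. g x \<partial>\<mu>)"
    using weak g(1) unfolding weak_star_conv_def by blast
  from tendsto_add [OF diff g_lim] show ?thesis
    by simp
qed

lemma DLR_equation_weak_star_limit:
  fixes \<nu> :: "nat \<Rightarrow> ('e::finite) config measure"
  assumes weak: "weak_star_conv \<nu> \<mu>"
    and \<nu>: "\<And>j. prob_space (\<nu> j)" "\<And>j. sets (\<nu> j) = sets Xspace" and \<mu>: "sets \<mu> = sets Xspace"
    and H: "quasilocal H" and Hs: "\<And>j. Hs j \<in> borel_measurable Xspace"
    and lim: "uniform_limit UNIV Hs H sequentially"
    and "finite \<Lambda>" and C: "C \<in> cylinder_sets"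
    and DLR: "\<And>j. measure (\<nu> j) C = (\<integral>\<eta>. gibbs_kernel (Hs j) \<Lambda> C \<eta> \<partial>\<nu> j)"
  shows "measure \<mu> C = (\<integral>\<eta>. gibbs_kernel H \<Lambda> C \<eta> \<partial>\<mu>)"
proof -
  have g: "quasilocal (gibbs_kernel H \<Lambda> C)"
    by (rule quasilocal_gibbs_kernel [OF H \<open>finite \<Lambda>\<close> C])
  have "(\<lambda>j. measure (\<nu> j) C) \<longlonglongrightarrow> (\<integral>\<eta>. gibbs_kernel H \<Lambda> C \<eta> \<partial>\<mu>)"
    unfolding DLR
  proof (rule weak_star_conv_integral_uniform_limit [OF weak \<nu>, where B = 1])
    show "continuous_map Xtop euclideanreal (gibbs_kernel H \<Lambda> C)"
      by (rule quasilocal_continuous [OF g])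
    show "gibbs_kernel H \<Lambda> C \<in> borel_measurable Xspace"
      by (rule quasilocal_measurable [OF g])
    show "gibbs_kernel (Hs j) \<Lambda> C \<in> borel_measurable Xspace" for j
      by (rule gibbs_kernel_measurable [OF Hs cylinder_sets_measurable [OF C]])
    show "uniform_limit UNIV (\<lambda>j. gibbs_kernel (Hs j) \<Lambda> C) (gibbs_kernel H \<Lambda> C) sequentially"
      by (rule uniform_limit_gibbs_kernel [OF \<open>finite \<Lambda>\<close> lim])
  qed (rule abs_gibbs_kernel_le_1)+
  moreover have "(\<lambda>j. measure (\<nu> j) C) \<longlonglongrightarrow> measure \<mu> C"
    by (rule measure_tendsto_weak_star_cylinder [OF weak \<nu>(2) \<mu> C])
  ultimately show ?thesis
    by (rule LIMSEQ_unique [rotated])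
qed

lemma gibbs_measure_weak_star_limit:
  fixes \<Phi> :: "('e::finite) interaction" and \<Phi>s :: "nat \<Rightarrow> 'e interaction"
  assumes \<Phi>: "is_interaction \<Phi>" "UAC \<Phi>"
    and \<Phi>s: "\<And>j. is_interaction (\<Phi>s j)" "\<And>j. UAC (\<Phi>s j)"
    and conv: "\<And>\<Lambda>. finite \<Lambda> \<Longrightarrow>
      uniform_limit UNIV (\<lambda>j. hamiltonian (\<Phi>s j) \<Lambda>) (hamiltonian \<Phi> \<Lambda>) sequentially"
    and gibbs: "\<And>j. gibbs_measure (\<Phi>s j) (\<nu> j)"
    and weak: "weak_star_conv \<nu> \<mu>" and \<mu>: "sets \<mu> = sets Xspace" "prob_space \<mu>"
  shows "gibbs_measure \<Phi> \<mu>"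
proof -
  have \<nu>: "sets (\<nu> j) = sets Xspace" "prob_space (\<nu> j)"
    and DLR: "\<And>\<Lambda> A. finite \<Lambda> \<Longrightarrow> A \<in> sets Xspace \<Longrightarrow>
      measure (\<nu> j) A = (\<integral>\<eta>. gibbs_kernel (hamiltonian (\<Phi>s j) \<Lambda>) \<Lambda> A \<eta> \<partial>\<nu> j)" for j
    using gibbs [of j] unfolding gibbs_measure_iff [OF \<Phi>s] by auto
  show ?thesis
    unfolding gibbs_measure_iff [OF \<Phi>]
  proof (intro conjI allI impI \<mu>)
    fix \<Lambda> :: "int set" and A :: "'e config set"
    assume "finite \<Lambda>" "A \<in> sets Xspace"
    note H = hamiltonian_quasilocal [OF \<Phi> \<open>finite \<Lambda>\<close>]
    have Hs: "hamiltonian (\<Phi>s j) \<Lambda> \<in> borel_measurable Xspace" for j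
      by (rule quasilocal_measurable [OF hamiltonian_quasilocal [OF \<Phi>s \<open>finite \<Lambda>\<close>]])
    show "measure \<mu> A = (\<integral>\<eta>. gibbs_kernel (hamiltonian \<Phi> \<Lambda>) \<Lambda> A \<eta> \<partial>\<mu>)"
    proof (rule DLR_equation_from_cylinder_sets [OF \<mu>(2,1) quasilocal_measurable [OF H]
          \<open>finite \<Lambda>\<close> _ \<open>A \<in> sets Xspace\<close>])
      fix C :: "'e config set"
      assume C: "C \<in> cylinder_sets"
      show "measure \<mu> C = (\<integral>\<eta>. gibbs_kernel (hamiltonian \<Phi> \<Lambda>) \<Lambda> C \<eta> \<partial>\<mu>)"
        by (rule DLR_equation_weak_star_limit [OF weak \<nu>(2,1) \<mu>(1) H Hs conv [OF \<open>finite \<Lambda>\<close>]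
              \<open>finite \<Lambda>\<close> C DLR [OF \<open>finite \<Lambda>\<close> cylinder_sets_measurable [OF C]]])
    qed
  qed
qed

section \<open>Absolute continuity of the limit\<close>

definition add_measure :: "'a measure \<Rightarrow> 'a measure \<Rightarrow> 'a measure" where
  "add_measure M N = measure_of (space M) (sets M) (\<lambda>A. emeasure M A + emeasure N A)"

lemma sets_add_measure [simp]: "sets (add_measure M N) = sets M"
  by (simp add: add_measure_def)

lemma space_add_measure [simp]: "space (add_measure M N) = space M"
  by (simp add: add_measure_def)

lemma emeasure_add_measure:
  assumes "sets N = sets M" "A \<in> sets M"
  shows "emeasure (add_measure M N) A = emeasure M A + emeasure N A"
  unfolding add_measure_def
proof (rule emeasure_measure_of_sigma [OF sets.sigma_algebra_axioms _ _ assms(2)])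
  show "positive (sets M) (\<lambda>A. emeasure M A + emeasure N A)"
    by (simp add: positive_def)
  show "countably_additive (sets M) (\<lambda>A. emeasure M A + emeasure N A)"
  proof (rule countably_additiveI)
    fix F :: "nat \<Rightarrow> 'a set"
    assume "range F \<subseteq> sets M" "disjoint_family F"
    then show "(\<Sum>i. emeasure M (F i) + emeasure N (F i)) = emeasure M (\<Union>i. F i) + emeasure N (\<Union>i. F i)"
      using assms(1) by (simp add: suminf_add [symmetric] suminf_emeasure)
  qed
qed

lemma finite_measure_add_measure:
  assumes "finite_measure M" "finite_measure N" "sets N = sets M"
  shows "finite_measure (add_measure M N)"
proof
  have "emeasure (add_measure M N) (space M) = emeasure M (space M) + emeasure N (space M)"
    using assms(3) by (simp add: emeasure_add_measure)
  then show "emeasure (add_measure M N) (space (add_measure M N)) \<noteq> \<infinity>"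
    using finite_measure.emeasure_finite [OF assms(1)] finite_measure.emeasure_finite [OF assms(2)]
      sets_eq_imp_space_eq [OF assms(3)] by (simp add: ennreal_add_eq_top)
qed

lemma measure_add_measure:
  assumes "finite_measure M" "finite_measure N" "sets N = sets M" "A \<in> sets M"
  shows "measure (add_measure M N) A = measure M A + measure N A"
  unfolding measure_def emeasure_add_measure [OF assms(3,4)]
  using finite_measure.emeasure_finite [OF assms(1)] finite_measure.emeasure_finite [OF assms(2)]
  by (simp add: enn2real_plus less_top)

lemma measure_Diff_UN_lessThan_less:
  fixes B :: "nat \<Rightarrow> 'a set"
  assumes "finite_measure M" "range B \<subseteq> sets M" "0 < \<delta>"
  obtains N where "measure M ((\<Union>i. B i) - (\<Union>i<N. B i)) < \<delta>"
proof -
  interpret finite_measure M by fact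
  let ?U = "\<Union>i. B i" and ?P = "\<lambda>n. \<Union>i<n. B i"
  have P_sets: "?P n \<in> sets M" for n
    using assms(2) by blast
  have "incseq ?P"
    unfolding incseq_def by (intro allI impI UN_mono) auto
  then have "(\<lambda>n. measure M (?P n)) \<longlonglongrightarrow> measure M (\<Union>n. ?P n)"
    using P_sets by (intro finite_Lim_measure_incseq) auto
  moreover have "(\<Union>n. ?P n) = ?U"
    using UN_UN_finite_eq [of B] by (simp add: atLeast0LessThan)
  ultimately have "\<forall>\<^sub>F n in sequentially. measure M ?U - \<delta> < measure M (?P n)"
    using \<open>0 < \<delta>\<close> by (intro order_tendstoD(1)) auto
  then obtain N where "measure M ?U - \<delta> < measure M (?P N)"
    by (auto simp: eventually_sequentially)
  moreover have "measure M (?U - ?P N) = measure M ?U - measure M (?P N)"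
    using assms(2) P_sets by (intro finite_measure_Diff) auto
  ultimately have "measure M (?U - ?P N) < \<delta>"
    by simp
  then show ?thesis
    by (rule that)
qed

lemma algebra_approx_UNION:
  fixes B :: "nat \<Rightarrow> 'a set"
  assumes G: "algebra \<Omega> G" and M: "finite_measure M" "G \<subseteq> sets M" "range B \<subseteq> sets M"
    and approx: "\<And>i \<delta>. 0 < \<delta> \<Longrightarrow> \<exists>C\<in>G. measure M (sym_diff (B i) C) < \<delta>"
    and "0 < \<delta>"
  shows "\<exists>D\<in>G. measure M (sym_diff (\<Union>i. B i) D) < \<delta>"
proof -
  interpret G: algebra \<Omega> G by fact
  interpret finite_measure M by fact
  let ?U = "\<Union>i. B i" and ?P = "\<lambda>n. \<Union>i<n. B i"
  have "0 < \<delta> / 2"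
    using \<open>0 < \<delta>\<close> by simp
  then obtain N where tail: "measure M (?U - ?P N) < \<delta> / 2"
    using measure_Diff_UN_lessThan_less [OF M(1,3)] by blast
  have P_sets: "?P N \<in> sets M"
    using M(3) by blast
  define \<delta>' where "\<delta>' = \<delta> / (2 * (real N + 1))"
  have "0 < \<delta>'"
    using \<open>0 < \<delta>\<close> by (simp add: \<delta>'_def)
  then have "\<forall>i. \<exists>C. C \<in> G \<and> measure M (sym_diff (B i) C) < \<delta>'"
    using approx by blast
  then obtain C where C: "\<And>i. C i \<in> G" "\<And>i. measure M (sym_diff (B i) (C i)) < \<delta>'"
    by metis
  have sd_sets: "sym_diff (B i) (C i) \<in> sets M" for i
    using C(1) M(2,3) by blast
  have "sym_diff ?U (\<Union>i<N. C i) \<subseteq> (?U - ?P N) \<union> (\<Union>i<N. sym_diff (B i) (C i))"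
    by blast
  then have "measure M (sym_diff ?U (\<Union>i<N. C i))
      \<le> measure M ((?U - ?P N) \<union> (\<Union>i<N. sym_diff (B i) (C i)))"
    using M(3) P_sets sd_sets by (intro finite_measure_mono) auto
  also have "\<dots> \<le> measure M (?U - ?P N) + measure M (\<Union>i<N. sym_diff (B i) (C i))"
    using M(3) P_sets sd_sets by (intro measure_Un_le) auto
  also have "measure M (\<Union>i<N. sym_diff (B i) (C i)) \<le> (\<Sum>i<N. measure M (sym_diff (B i) (C i)))"
    using sd_sets by (intro finite_measure_subadditive_finite) auto
  also have "\<dots> \<le> real N * \<delta>'"
    using sum_bounded_above [of "{..<N}" "\<lambda>i. measure M (sym_diff (B i) (C i))" \<delta>'] C(2)
    by (simp add: less_imp_le)
  also have "real N * \<delta>' < \<delta> / 2"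
    using \<open>0 < \<delta>\<close> by (simp add: \<delta>'_def field_simps)
  finally have "measure M (sym_diff ?U (\<Union>i<N. C i)) < \<delta>"
    using tail by simp
  moreover have "(\<Union>i<N. C i) \<in> G"
    using C(1) by (intro G.finite_UN) auto
  ultimately show ?thesis
    by blast
qed

lemma algebra_approx_sigma_sets:
  assumes G: "algebra \<Omega> G" and M: "finite_measure M" "sets M = sigma_sets \<Omega> G"
    and A: "A \<in> sets M" and "0 < \<delta>"
  shows "\<exists>C\<in>G. measure M (sym_diff A C) < \<delta>"
proof -
  interpret G: algebra \<Omega> G by fact
  have "A \<in> sigma_sets \<Omega> G"
    using A M(2) by simp
  with G.Int_stable G.space_closed have "\<forall>\<delta>>0. \<exists>C\<in>G. measure M (sym_diff A C) < \<delta>"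
  proof (induction rule: sigma_sets_induct_disjoint)
    case (basic B)
    then show ?case
      by (auto intro!: bexI [of _ B])
  next
    case empty
    then show ?case
      using G.empty_sets by (auto intro!: bexI [of _ "{}"])
  next
    case (compl B)
    show ?case
    proof (intro allI impI)
      fix \<delta> :: real
      assume "0 < \<delta>"
      then obtain C where C: "C \<in> G" "measure M (sym_diff B C) < \<delta>"
        using compl(2) by blast
      have "B \<subseteq> \<Omega>" "C \<subseteq> \<Omega>"
        using sigma_sets_into_sp [OF G.space_closed compl(1)] G.sets_into_space C(1) by auto
      then have "sym_diff (\<Omega> - B) (\<Omega> - C) = sym_diff B C"
        by blast
      then show "\<exists>C\<in>G. measure M (sym_diff (\<Omega> - B) C) < \<delta>"
        using C G.compl_sets by metis
    qed
  next
    case (union B)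
    have "G \<subseteq> sets M" "range B \<subseteq> sets M"
      using union(2) M(2) by (auto intro: sigma_sets.Basic)
    then show ?case
      using algebra_approx_UNION [OF G M(1)] union(3) by blast
  qed
  then show ?thesis
    using \<open>0 < \<delta>\<close> by blast
qed

lemma measure_le_affine_from_algebra:
  assumes G: "algebra \<Omega> G" and M: "finite_measure M" "sets M = sigma_sets \<Omega> G"
    and N: "finite_measure N" "sets N = sets M" and "0 \<le> K"
    and le: "\<And>C. C \<in> G \<Longrightarrow> measure M C \<le> K * measure N C + e"
    and A: "A \<in> sets M"
  shows "measure M A \<le> K * measure N A + e"
proof (rule field_le_epsilon)
  fix \<epsilon> :: real
  assume "0 < \<epsilon>"
  let ?S = "add_measure M N"
  have S: "finite_measure ?S" "sets ?S = sigma_sets \<Omega> G"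
    using finite_measure_add_measure [OF M(1) N] M(2) by simp_all
  have "0 < \<epsilon> / (K + 1)"
    using \<open>0 < \<epsilon>\<close> \<open>0 \<le> K\<close> by simp
  moreover have "A \<in> sets ?S"
    using A by simp
  ultimately obtain C where C: "C \<in> G" "measure ?S (sym_diff A C) < \<epsilon> / (K + 1)"
    using algebra_approx_sigma_sets [OF G S] by blast
  have C_sets: "C \<in> sets M"
    using C(1) M(2) by (simp add: sigma_sets.Basic)
  then have sd_sets: "sym_diff A C \<in> sets M"
    using A by blast
  have sd: "measure M (sym_diff A C) + measure N (sym_diff A C) < \<epsilon> / (K + 1)"
    using C(2) measure_add_measure [OF M(1) N sd_sets] by simp
  have "measure M A \<le> measure M (C \<union> sym_diff A C)"
    using C_sets sd_sets by (intro finite_measure.finite_measure_mono [OF M(1)]) auto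
  also have "\<dots> \<le> measure M C + measure M (sym_diff A C)"
    using C_sets sd_sets by (rule measure_Un_le)
  finally have M_le: "measure M A \<le> measure M C + measure M (sym_diff A C)" .
  have "measure N C \<le> measure N (A \<union> sym_diff A C)"
    using C_sets sd_sets A N(2) by (intro finite_measure.finite_measure_mono [OF N(1)]) auto
  also have "\<dots> \<le> measure N A + measure N (sym_diff A C)"
    using A sd_sets N(2) by (intro measure_Un_le) auto
  finally have N_le: "measure N C \<le> measure N A + measure N (sym_diff A C)" .
  have "measure M A \<le> K * measure N A + e + (K * measure N (sym_diff A C) + measure M (sym_diff A C))"
    using M_le le [OF C(1)] mult_left_mono [OF N_le \<open>0 \<le> K\<close>] by (simp add: algebra_simps)
  also have "K * measure N (sym_diff A C) + measure M (sym_diff A C)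
      \<le> (K + 1) * (measure M (sym_diff A C) + measure N (sym_diff A C))"
    using \<open>0 \<le> K\<close> by (simp add: algebra_simps)
  also have "\<dots> \<le> \<epsilon>"
    using sd \<open>0 \<le> K\<close> by (simp add: field_simps)
  finally show "measure M A \<le> K * measure N A + e + \<epsilon>"
    by simp
qed

lemma unif_integrable_subseq: "unif_integrable M f \<Longrightarrow> unif_integrable M (\<lambda>k. f (r k))"
  unfolding unif_integrable_def by blast

lemma integrable_indicator_abs_gt:
  fixes f :: "'a \<Rightarrow> real"
  assumes "integrable M f"
  shows "integrable M (\<lambda>x. indicator {x. K < \<bar>f x\<bar>} x * \<bar>f x\<bar>)"
proof (rule Bochner_Integration.integrable_bound [OF integrable_abs [OF assms]])
  have "(\<lambda>x. if K < \<bar>f x\<bar> then \<bar>f x\<bar> else 0) \<in> borel_measurable M"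
    using borel_measurable_integrable [OF assms] by measurable
  moreover have "(\<lambda>x. indicator {x. K < \<bar>f x\<bar>} x * \<bar>f x\<bar>) = (\<lambda>x. if K < \<bar>f x\<bar> then \<bar>f x\<bar> else 0)"
    by (simp add: fun_eq_iff indicator_def)
  ultimately show "(\<lambda>x. indicator {x. K < \<bar>f x\<bar>} x * \<bar>f x\<bar>) \<in> borel_measurable M"
    by simp
  show "AE x in M. norm (indicator {x. K < \<bar>f x\<bar>} x * \<bar>f x\<bar>) \<le> norm \<bar>f x\<bar>"
    by (simp add: indicator_def)
qed

lemma measure_le_of_unif_integrable:
  fixes \<rho> :: "'a measure" and \<nu> :: "nat \<Rightarrow> 'a measure"
  assumes \<rho>: "prob_space \<rho>" and \<nu>: "\<And>k. prob_space (\<nu> k)" "\<And>k. sets (\<nu> k) = sets \<rho>"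
    and ac: "\<And>k. absolutely_continuous \<rho> (\<nu> k)"
    and ui: "unif_integrable \<rho> (\<lambda>k x. enn2real (RN_deriv \<rho> (\<nu> k) x))"
    and "0 < e"
  shows "\<exists>K\<ge>0. \<forall>k. \<forall>B\<in>sets \<rho>. measure (\<nu> k) B \<le> K * measure \<rho> B + e"
proof -
  interpret \<rho>: prob_space \<rho> by fact
  define f where "f k x = enn2real (RN_deriv \<rho> (\<nu> k) x)" for k x
  have f_int: "integrable \<rho> (f k)" for k
    using ui unfolding unif_integrable_def f_def by blast
  obtain K0 where K0: "\<And>k. (\<integral>x. indicator {x. K0 < \<bar>f k x\<bar>} x * \<bar>f k x\<bar> \<partial>\<rho>) \<le> e"
    using ui \<open>0 < e\<close> unfolding unif_integrable_def f_def by blast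
  define K where "K = max K0 0"
  have "measure (\<nu> k) B \<le> K * measure \<rho> B + e" if B: "B \<in> sets \<rho>" for k B
  proof -
    interpret \<nu>: prob_space "\<nu> k" by (rule \<nu>(1))
    let ?tail = "\<lambda>x. indicator {x. K0 < \<bar>f k x\<bar>} x * \<bar>f k x\<bar> :: real"
    have "emeasure \<rho> B < \<infinity>"
      by (simp add: \<rho>.emeasure_eq_measure)
    then have B_int: "integrable \<rho> (\<lambda>x. K * indicator B x)"
      using B by (intro integrable_mult_right integrable_real_indicator)
    have tail_int: "integrable \<rho> ?tail"
      by (rule integrable_indicator_abs_gt [OF f_int])
    have "measure (\<nu> k) B = (\<integral>x. indicator B x \<partial>\<nu> k)"
      using B \<nu>(2) sets.Int_space_eq2 by simp
    also have "\<dots> = (\<integral>x. f k x * indicator B x \<partial>\<rho>)"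
      unfolding f_def using B by (intro \<rho>.RN_deriv_integral \<nu>.sigma_finite_measure_axioms ac \<nu>(2)) simp
    also have "\<dots> \<le> (\<integral>x. K * indicator B x + ?tail x \<partial>\<rho>)"
    proof (rule integral_mono)
      show "integrable \<rho> (\<lambda>x. f k x * indicator B x)"
        using B f_int by (rule integrable_real_mult_indicator)
      show "integrable \<rho> (\<lambda>x. K * indicator B x + ?tail x)"
        using B_int tail_int by (rule Bochner_Integration.integrable_add)
      show "f k x * indicator B x \<le> K * indicator B x + ?tail x" for x
        by (cases "x \<in> B"; cases "K0 < \<bar>f k x\<bar>") (auto simp: K_def f_def)
    qed
    also have "\<dots> = K * measure \<rho> B + (\<integral>x. ?tail x \<partial>\<rho>)"
      using B_int tail_int B by simp
    also have "\<dots> \<le> K * measure \<rho> B + e"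
      using K0 [of k] by simp
    finally show ?thesis .
  qed
  moreover have "0 \<le> K"
    by (simp add: K_def)
  ultimately show ?thesis
    by blast
qed

lemma measure_le_affine_weak_star_limit:
  fixes \<nu> :: "nat \<Rightarrow> ('e::finite) config measure"
  assumes weak: "weak_star_conv \<nu> \<mu>"
    and \<nu>: "\<And>j. sets (\<nu> j) = sets Xspace" and \<mu>: "prob_space \<mu>" "sets \<mu> = sets Xspace"
    and \<rho>: "prob_space \<rho>" "sets \<rho> = sets Xspace" and "0 \<le> K"
    and le: "\<And>j B. B \<in> sets Xspace \<Longrightarrow> measure (\<nu> j) B \<le> K * measure \<rho> B + e"
    and B: "B \<in> sets Xspace"
  shows "measure \<mu> B \<le> K * measure \<rho> B + e"
proof (rule measure_le_affine_from_algebra [OF cylinder_sets_algebra prob_space.finite_measure [OF \<mu>(1)] _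
      prob_space.finite_measure [OF \<rho>(1)] _ \<open>0 \<le> K\<close>])
  show "sets \<mu> = sigma_sets UNIV cylinder_sets" "sets \<rho> = sets \<mu>" "B \<in> sets \<mu>"
    using \<mu>(2) \<rho>(2) B sets_Xspace_eq_sigma_cylinder_sets by simp_all
  show "measure \<mu> C \<le> K * measure \<rho> C + e" if C: "C \<in> cylinder_sets" for C
  proof (rule LIMSEQ_le_const2 [OF measure_tendsto_weak_star_cylinder [OF weak \<nu> \<mu>(2) C]])
    show "\<exists>n0. \<forall>n\<ge>n0. measure (\<nu> n) C \<le> K * measure \<rho> C + e"
      using le [OF cylinder_sets_measurable [OF C]] by blast
  qed
qed

lemma absolutely_continuous_weak_star_limit:
  fixes \<nu> :: "nat \<Rightarrow> ('e::finite) config measure"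
  assumes \<rho>: "prob_space \<rho>" "sets \<rho> = sets Xspace"
    and \<nu>: "\<And>j. prob_space (\<nu> j)" "\<And>j. sets (\<nu> j) = sets Xspace"
    and ac: "\<And>j. absolutely_continuous \<rho> (\<nu> j)"
    and ui: "unif_integrable \<rho> (\<lambda>j x. enn2real (RN_deriv \<rho> (\<nu> j) x))"
    and weak: "weak_star_conv \<nu> \<mu>" and \<mu>: "prob_space \<mu>" "sets \<mu> = sets Xspace"
  shows "absolutely_continuous \<rho> \<mu>"
  unfolding absolutely_continuous_def
proof
  fix N
  assume "N \<in> null_sets \<rho>"
  then have N: "N \<in> sets Xspace" "measure \<rho> N = 0"
    using \<rho>(2) by (auto simp: null_sets_def measure_def)
  have "measure \<mu> N \<le> 0 + e" if "0 < e" for e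
  proof -
    have "sets (\<nu> j) = sets \<rho>" for j
      using \<nu>(2) \<rho>(2) by simp
    then obtain K where "0 \<le> K" and K: "\<forall>j. \<forall>B\<in>sets \<rho>. measure (\<nu> j) B \<le> K * measure \<rho> B + e"
      using measure_le_of_unif_integrable [OF \<rho>(1) \<nu>(1) _ ac ui \<open>0 < e\<close>] by blast
    then have "measure \<mu> N \<le> K * measure \<rho> N + e"
      using \<rho>(2) by (intro measure_le_affine_weak_star_limit [OF weak \<nu>(2) \<mu> \<rho> _ _ N(1)]) auto
    with N(2) show ?thesis
      by simp
  qed
  then have "measure \<mu> N = 0"
    by (meson field_le_epsilon measure_nonneg order_antisym)
  then show "N \<in> null_sets \<mu>"
    using N(1) \<mu>(2) finite_measure.emeasure_eq_measure [OF prob_space.finite_measure [OF \<mu>(1)]]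
    by (simp add: null_sets_def)
qed

lemma hamiltonian_Psi_uniform_limit:
  fixes \<Phi> :: "('e::finite) interaction"
  assumes "is_interaction \<Phi>" "UAC \<Phi>" "inj_on enum {i. 1 \<le> i}"
    and r: "filterlim r sequentially sequentially" and "finite \<Lambda>"
  shows "uniform_limit UNIV (\<lambda>j. hamiltonian (Psi enum \<Phi> (r j)) \<Lambda>) (hamiltonian \<Phi> \<Lambda>) sequentially"
proof -
  have "\<forall>\<^sub>F j in sequentially. V \<notin> enum ` {i. r j + 1 \<le> i}" for V
    using eventually_compose_filterlim [OF eventually_not_in_enum_tail [OF assms(3)] r] by simp
  then show ?thesis
    unfolding Psi_eq_remove_sets
    by (rule hamiltonian_remove_sets_uniform_limit [where T = "\<lambda>j. enum ` {i. r j + 1 \<le> i}",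
          OF assms(1,2,5)])
qed

theorem theoremD:
  fixes \<Phi> :: "('e::finite) interaction"
    and enum :: "nat \<Rightarrow> int set"
    and \<nu> :: "nat \<Rightarrow> 'e config measure"
  assumes "is_interaction \<Phi>" and "UAC \<Phi>" and "dobrushin \<Phi>"
    and "bij_betw enum {i. 1 \<le> i} crossing_sets"
    and "\<And>k. gibbs_measure (Psi enum \<Phi> k) (\<nu> k)"
    and "\<And>k. absolutely_continuous (\<nu> 0) (\<nu> k)"
    and "unif_integrable (\<nu> 0) (\<lambda>k x. enn2real (RN_deriv (\<nu> 0) (\<nu> k) x))"
  shows "\<forall>\<mu> r. strict_mono r \<and> sets \<mu> = sets Xspace \<and> prob_space \<mu> \<and>
            weak_star_conv (\<lambda>j. \<nu> (r j)) \<mu> \<longrightarrow>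
            gibbs_measure \<Phi> \<mu> \<and> absolutely_continuous (\<nu> 0) \<mu>"
proof (intro allI impI conjI)
  fix \<mu> and r :: "nat \<Rightarrow> nat"
  assume "strict_mono r \<and> sets \<mu> = sets Xspace \<and> prob_space \<mu> \<and> weak_star_conv (\<lambda>j. \<nu> (r j)) \<mu>"
  then have r: "strict_mono r" and \<mu>: "sets \<mu> = sets Xspace" "prob_space \<mu>"
    and weak: "weak_star_conv (\<lambda>j. \<nu> (r j)) \<mu>"
    by auto
  have \<nu>: "sets (\<nu> k) = sets Xspace" "prob_space (\<nu> k)" for k
    using assms(5) by (auto simp: gibbs_measure_def)
  have inj: "inj_on enum {i. 1 \<le> i}"
    using assms(4) by (simp add: bij_betw_def)
  show "gibbs_measure \<Phi> \<mu>"
  proof (rule gibbs_measure_weak_star_limit [where \<Phi>s = "\<lambda>j. Psi enum \<Phi> (r j)",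
        OF assms(1,2) _ _ hamiltonian_Psi_uniform_limit [OF assms(1,2) inj filterlim_subseq [OF r]] _ weak \<mu>])
    show "is_interaction (Psi enum \<Phi> (r j))" "UAC (Psi enum \<Phi> (r j))" for j
      unfolding Psi_eq_remove_sets using assms(1,2)
      by (simp_all add: is_interaction_remove_sets UAC_remove_sets)
  qed (simp_all add: assms(5))
  show "absolutely_continuous (\<nu> 0) \<mu>"
    by (rule absolutely_continuous_weak_star_limit [where \<nu> = "\<lambda>j. \<nu> (r j)",
          OF \<nu>(2) \<nu>(1) \<nu>(2) \<nu>(1) assms(6) unif_integrable_subseq [OF assms(7)] weak \<mu>(2,1)])
qed

end
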